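(* Let $G=(X,b,m,c)$ be a weighted graph with $c=0$ and let $p\in(1,\infty)$. The following are equivalent: (i) $G$ is $p$-parabolic; (ii) $D^p=D_0^p$; (iii) $D^p\cap\ell^p(X,\mu)=D_0^p\cap\ell^p(X,\mu)$ for all measures $\mu\colon X\to(0,\infty)$; (iv) $1\in D_0^p$; (v) there is a sequence $(e_n)$ of finitely supported functions with $0\le e_n$, $e_n$ nondecreasing in $n$ and converging pointwise to $1$, and $\mathcal{E}_p(e_n)\to0$; (vi) there is a sequence $(e_n)$ of finitely supported functions with $e_n\to1$ pointwise and $\sup_n\mathcal{E}_p(e_n)<\infty$; (vii) there exist $u\in D_0^p$ and a finite set $K\subseteq X$ with $\inf_{x\in X\setminus K}u(x)>0$; (viii) the functionals $\mathcal{E}_p^{1/p}$ and $\|\cdot\|_{o,p}$ are not equivalent on the finitely supported functions for some (equivalently, all) $o\in X$.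
   Context: Weighted graph $G=(X,b,m,c)$: $X$ countably infinite; $b$ symmetric, nonnegative, zero on the diagonal, $\sum_yb(x,y)<\infty$; $m>0$; $c\ge0$; $x\sim y$ iff $b(x,y)>0$; $X$ connected. $\mathcal{E}_p(f)=\frac12\sum_{x,y}b(x,y)|f(x)-f(y)|^p+\sum_xc(x)|f(x)|^p$, $D^p=\{f:\mathcal{E}_p(f)<\infty\}$, $\|f\|_{o,p}=(\mathcal{E}_p(f)+|f(o)|^p)^{1/p}$, and $D_0^p$ is the closure of the finitely supported functions in $(D^p,\|\cdot\|_{o,p})$. $\ell^p(X,\mu)=\{f:\sum_x|f(x)|^p\mu(x)<\infty\}$. $G$ is $p$-parabolic if $\inf\{\mathcal{E}_p(\varphi):\varphi\text{ finitely supported},\varphi\ge1\text{ on }K\}=0$ for all finite $K$. *)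

theory Defs
  imports "HOL-Analysis.Analysis"
begin

definition weighted_graph ::
  "('x \<Rightarrow> 'x \<Rightarrow> real) \<Rightarrow> ('x \<Rightarrow> real) \<Rightarrow> ('x \<Rightarrow> real) \<Rightarrow> bool" where
  "weighted_graph b m c \<longleftrightarrow>
     countable (UNIV :: 'x set) \<and> infinite (UNIV :: 'x set) \<and>
     (\<forall>x y. b x y = b y x) \<and> (\<forall>x y. 0 \<le> b x y) \<and> (\<forall>x. b x x = 0) \<and>
     (\<forall>x. (\<lambda>y. b x y) summable_on UNIV) \<and>
     (\<forall>x. 0 < m x) \<and> (\<forall>x. 0 \<le> c x) \<and>
     (\<forall>x y. (x, y) \<in> {(x, y). 0 < b x y}\<^sup>*)"

definition fin_supp :: "('x \<Rightarrow> real) \<Rightarrow> bool" where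
  "fin_supp f \<longleftrightarrow> finite {x. f x \<noteq> 0}"

definition energy ::
  "('x \<Rightarrow> 'x \<Rightarrow> real) \<Rightarrow> ('x \<Rightarrow> real) \<Rightarrow> real \<Rightarrow> ('x \<Rightarrow> real) \<Rightarrow> ennreal" where
  "energy b c p f =
     infsum (\<lambda>(x, y). ennreal (b x y * \<bar>f x - f y\<bar> powr p)) UNIV / 2
     + infsum (\<lambda>x. ennreal (c x * \<bar>f x\<bar> powr p)) UNIV"

definition Dp :: "('x \<Rightarrow> 'x \<Rightarrow> real) \<Rightarrow> ('x \<Rightarrow> real) \<Rightarrow> real \<Rightarrow> ('x \<Rightarrow> real) set" where
  "Dp b c p = {f. energy b c p f < \<infinity>}"

text \<open>The norm \<open>\<parallel>f\<parallel>_{o,p}\<close> (meaningful for f in D^p, where the energy is finite).\<close>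
definition normo ::
  "('x \<Rightarrow> 'x \<Rightarrow> real) \<Rightarrow> ('x \<Rightarrow> real) \<Rightarrow> real \<Rightarrow> 'x \<Rightarrow> ('x \<Rightarrow> real) \<Rightarrow> real" where
  "normo b c p x0 f = (enn2real (energy b c p f) + \<bar>f x0\<bar> powr p) powr (1 / p)"

definition D0p ::
  "('x \<Rightarrow> 'x \<Rightarrow> real) \<Rightarrow> ('x \<Rightarrow> real) \<Rightarrow> real \<Rightarrow> 'x \<Rightarrow> ('x \<Rightarrow> real) set" where
  "D0p b c p x0 = {f \<in> Dp b c p. \<exists>\<phi>. (\<forall>n. fin_supp (\<phi> n)) \<and>
                    (\<lambda>n. normo b c p x0 (\<lambda>x. \<phi> n x - f x)) \<longlonglongrightarrow> 0}"

definition lp :: "real \<Rightarrow> ('x \<Rightarrow> real) \<Rightarrow> ('x \<Rightarrow> real) set" where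
  "lp p \<mu> = {f. (\<lambda>x. \<bar>f x\<bar> powr p * \<mu> x) summable_on UNIV}"

definition p_parabolic ::
  "('x \<Rightarrow> 'x \<Rightarrow> real) \<Rightarrow> ('x \<Rightarrow> real) \<Rightarrow> real \<Rightarrow> bool" where
  "p_parabolic b c p \<longleftrightarrow> (\<forall>K. finite K \<longrightarrow>
     (INF \<phi>\<in>{\<phi>. fin_supp \<phi> \<and> (\<forall>x\<in>K. 1 \<le> \<phi> x)}. energy b c p \<phi>) = 0)"

definition equiv_functionals ::
  "('x \<Rightarrow> 'x \<Rightarrow> real) \<Rightarrow> ('x \<Rightarrow> real) \<Rightarrow> real \<Rightarrow> 'x \<Rightarrow> bool" where
  "equiv_functionals b c p x0 \<longleftrightarrow> (\<exists>C1>0. \<exists>C2>0. \<forall>\<phi>. fin_supp \<phi> \<longrightarrow>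
      C1 * enn2real (energy b c p \<phi>) powr (1 / p) \<le> normo b c p x0 \<phi> \<and>
      normo b c p x0 \<phi> \<le> C2 * enn2real (energy b c p \<phi>) powr (1 / p))"

end

theory Submission
  imports Defs
begin

text \<open>
  With \<open>c = 0\<close> the energy only sees differences, and along a path of the connected graph
  \<open>\<bar>f x - f y\<bar>\<^sup>p \<le> C\<^sub>x\<^sub>y \<E>\<^sub>p(f)\<close>. So finitely supported functions whose energies tend to 0 and whose
  values at one vertex tend to 1 tend to 1 everywhere, and, doubled, they are admissible for the
  capacity of any finite set; this gives parabolicity from (iv), (v) and, after normalizing at a
  vertex, from (viii). Conversely, parabolicity yields an exhaustion \<open>0 \<le> e\<^sub>n \<up> 1\<close> with
  \<open>\<E>\<^sub>p(e\<^sub>n) \<rightarrow> 0\<close>, and multiplying truncations of \<open>f \<in> D\<^sup>p\<close> by \<open>e\<^sub>n\<close> approximates \<open>f\<close> in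
  \<open>\<parallel>\<cdot>\<parallel>\<^sub>o\<^sub>,\<^sub>p\<close>, so \<open>D\<^sup>p = D\<^sub>0\<^sup>p\<close>.

  The substantial step is (vi) \<open>\<Rightarrow>\<close> (i). A sequence as in (vi) bounds the capacities of all finite
  sets. Take near-minimizers for the capacities of an exhausting sequence of finite sets: the
  midpoint of two of them is admissible, so the uniform convexity of \<open>\<bar>t\<bar>\<^sup>p\<close> makes them a Cauchy
  sequence for the energy. They tend to 1 pointwise, hence by lower semicontinuity their energies
  tend to 0. Finally (vii) reduces to (vi) by clipping \<open>u/\<delta>\<close> to [0, 1] and taking the maximum
  with the indicator of the exceptional finite set.
\<close>

section \<open>Infinite sums, limits and exhaustions\<close>

(* the library lemma summable_on_ennreal is shadowed by a later one about enat *)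
lemma ennreal_summable_on [simp]: "(f :: 'a \<Rightarrow> ennreal) summable_on A"
  by (simp add: nonneg_summable_on_complete)

lemma infsum_cmult_right_ennreal:
  "infsum (\<lambda>x. c * f x) A = (c::ennreal) * infsum f A"
  by (simp add: nonneg_infsum_complete sum_distrib_left[symmetric] SUP_mult_left_ennreal)

lemma infsum_ennreal_le_lincomb:
  fixes f g h :: "'a \<Rightarrow> real"
  assumes "\<And>z. h z \<le> c1 * f z + c2 * g z" and "\<And>z. 0 \<le> f z" "\<And>z. 0 \<le> g z" "0 \<le> c1" "0 \<le> c2"
  shows "infsum (\<lambda>z. ennreal (h z)) A
    \<le> ennreal c1 * infsum (\<lambda>z. ennreal (f z)) A + ennreal c2 * infsum (\<lambda>z. ennreal (g z)) A"
proof -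
  have "infsum (\<lambda>z. ennreal (h z)) A \<le> infsum (\<lambda>z. ennreal c1 * ennreal (f z) + ennreal c2 * ennreal (g z)) A"
    using assms by (intro infsum_mono)
      (simp_all add: ennreal_mult'[symmetric] ennreal_plus[symmetric] ennreal_leI del: ennreal_plus)
  then show ?thesis by (simp add: infsum_add infsum_cmult_right_ennreal)
qed

lemma infsum_ennreal_split_finite:
  fixes g :: "'a \<Rightarrow> ennreal"
  assumes "finite F"
  shows "infsum g UNIV = sum g F + infsum g (- F)"
  using infsum_Un_disjoint[of g F "- F"] assms by simp

lemma infsum_ennreal_tail_less:
  fixes g :: "'a \<Rightarrow> ennreal"
  assumes fin: "infsum g UNIV < \<infinity>" and e: "0 < e"
  obtains F where "finite F" "infsum g (- F) < e"
proof -
  have "\<exists>F. finite F \<and> infsum g (- F) < e"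
  proof (rule ccontr)
    assume "\<nexists>F. finite F \<and> infsum g (- F) < e"
    then have tail: "e \<le> infsum g (- F)" if "finite F" for F
      using that by (auto simp: not_less)
    have "infsum g UNIV + e = (SUP F\<in>{F. finite F \<and> F \<subseteq> UNIV}. sum g F + e)"
      by (subst nonneg_infsum_complete) (auto intro: ennreal_SUP_add_left[symmetric])
    also have "\<dots> \<le> infsum g UNIV"
      using tail by (intro SUP_least) (auto simp: infsum_ennreal_split_finite add_left_mono)
    finally have "infsum g UNIV + e \<le> infsum g UNIV + 0" by simp
    then show False using fin e by (auto simp: ennreal_add_left_cancel_le)
  qed
  then show ?thesis using that by blast
qed

lemma infsum_ennreal_dominated_tendsto_0:
  fixes h :: "nat \<Rightarrow> 'a \<Rightarrow> ennreal"
  assumes dom: "\<And>n z. h n z \<le> g z" and fin: "infsum g UNIV < \<infinity>"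
    and lim: "\<And>z. (\<lambda>n. h n z) \<longlonglongrightarrow> 0"
  shows "(\<lambda>n. infsum (h n) UNIV) \<longlonglongrightarrow> 0"
proof (rule order_tendstoI)
  fix a :: ennreal assume "a < 0" then show "\<forall>\<^sub>F n in sequentially. a < infsum (h n) UNIV" by simp
next
  fix a :: ennreal assume a: "0 < a"
  obtain a2 :: ennreal where a2: "0 < a2" "a2 + a2 \<le> a"
  proof (cases a)
    case (real t)
    then show ?thesis using that[of "ennreal (t / 2)"] a
      by (simp add: ennreal_plus[symmetric] del: ennreal_plus)
  qed (use that[of 1] in simp)
  obtain F where F: "finite F" and tail: "infsum g (- F) < a2"
    using infsum_ennreal_tail_less[OF fin a2(1)] .
  have "(\<lambda>n. sum (h n) F) \<longlonglongrightarrow> sum (\<lambda>z. 0) F"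
    by (intro tendsto_sum lim)
  then have "\<forall>\<^sub>F n in sequentially. sum (h n) F < a2"
    using a2(1) by (auto simp: order_tendsto_iff)
  then show "\<forall>\<^sub>F n in sequentially. infsum (h n) UNIV < a"
  proof eventually_elim
    case (elim n)
    have "infsum (h n) UNIV = sum (h n) F + infsum (h n) (- F)"
      using F by (rule infsum_ennreal_split_finite)
    also have "\<dots> \<le> sum (h n) F + infsum g (- F)"
      by (intro add_left_mono infsum_mono) (auto intro: dom)
    also have "\<dots> < a2 + a2" using elim tail by (rule add_strict_mono)
    finally show ?case using a2(2) by (rule order_less_le_trans)
  qed
qed

lemma ennreal_tendsto_0_if_le_inverse_Suc:
  fixes f :: "nat \<Rightarrow> ennreal"
  assumes "\<And>n. f n \<le> ennreal (1 / real (Suc n))"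
  shows "f \<longlonglongrightarrow> 0"
proof -
  have "(\<lambda>n. ennreal (1 / real (Suc n))) \<longlonglongrightarrow> ennreal 0"
    using LIMSEQ_inverse_real_of_nat by (intro tendsto_ennrealI) (simp add: inverse_eq_divide)
  then show ?thesis
    using tendsto_sandwich[of "\<lambda>_. 0" f sequentially "\<lambda>n. ennreal (1 / real (Suc n))" 0] assms by simp
qed

lemma tendsto_powr_0_iff:
  fixes f :: "'a \<Rightarrow> real"
  assumes "\<forall>\<^sub>F x in F. 0 \<le> f x" and "0 < q"
  shows "((\<lambda>x. f x powr q) \<longlongrightarrow> 0) F \<longleftrightarrow> (f \<longlongrightarrow> 0) F"
proof (rule iffI)
  assume "((\<lambda>x. f x powr q) \<longlongrightarrow> 0) F"
  from tendsto_zero_powrI[OF this tendsto_const, of "1 / q"]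
  have "((\<lambda>x. (f x powr q) powr (1 / q)) \<longlongrightarrow> 0) F"
    using assms by auto
  moreover have "\<forall>\<^sub>F x in F. (f x powr q) powr (1 / q) = f x"
    using assms(1) by eventually_elim (use assms(2) in \<open>simp add: powr_powr\<close>)
  ultimately show "(f \<longlongrightarrow> 0) F" by (rule Lim_transform_eventually)
qed (use assms in \<open>auto intro: tendsto_zero_powrI[OF _ tendsto_const]\<close>)

lemma exhausting_finite_sets:
  assumes "countable (UNIV :: 'x set)"
  shows "\<exists>F :: nat \<Rightarrow> 'x set. (\<forall>n. finite (F n)) \<and> incseq F \<and> (\<forall>x. \<forall>\<^sub>F n in sequentially. x \<in> F n)"
proof (intro exI conjI allI)
  let ?F = "\<lambda>n. from_nat_into (UNIV :: 'x set) ` {..<n}"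
  show "finite (?F n)" for n by simp
  show "incseq ?F" by (auto simp: incseq_def)
  show "\<forall>\<^sub>F n in sequentially. x \<in> ?F n" for x
  proof -
    obtain k where "from_nat_into UNIV k = x" using from_nat_into_surj[OF assms] by blast
    then show ?thesis unfolding eventually_sequentially by (intro exI[of _ "Suc k"]) auto
  qed
qed

lemma exists_pos_summable_weight:
  assumes "countable (UNIV :: 'x set)"
  shows "\<exists>\<mu> :: 'x \<Rightarrow> real. (\<forall>x. 0 < \<mu> x) \<and> \<mu> summable_on UNIV"
proof -
  define h where "h = to_nat_on (UNIV :: 'x set)"
  have "inj h" unfolding h_def using assms by (rule inj_on_to_nat_on)
  have "(\<lambda>n::nat. (1 / 2) ^ n :: real) summable_on UNIV"
    by (subst summable_on_UNIV_nonneg_real_iff) (auto simp: summable_geometric)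
  then have "(\<lambda>n::nat. (1 / 2) ^ n :: real) summable_on range h"
    by (rule summable_on_subset_banach) simp
  then have "(\<lambda>x. (1 / 2) ^ h x :: real) summable_on UNIV"
    using summable_on_reindex[OF \<open>inj h\<close>, of "\<lambda>n. (1 / 2) ^ n :: real"] by (simp add: comp_def)
  then show ?thesis by (intro exI[of _ "\<lambda>x. (1 / 2) ^ h x"]) auto
qed

section \<open>Elementary inequalities for \<open>\<bar>t\<bar>\<^sup>p\<close>\<close>

lemma abs_add_powr_le:
  fixes a c p :: real
  assumes "0 \<le> p"
  shows "\<bar>a + c\<bar> powr p \<le> 2 powr p * (\<bar>a\<bar> powr p + \<bar>c\<bar> powr p)"
proof -
  have "\<bar>a + c\<bar> powr p \<le> (2 * max \<bar>a\<bar> \<bar>c\<bar>) powr p"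
    using assms by (intro powr_mono2) auto
  also have "\<dots> = 2 powr p * max \<bar>a\<bar> \<bar>c\<bar> powr p" by (simp add: powr_mult)
  also have "max \<bar>a\<bar> \<bar>c\<bar> powr p \<le> \<bar>a\<bar> powr p + \<bar>c\<bar> powr p"
    by (cases "\<bar>a\<bar> \<le> \<bar>c\<bar>") (auto simp: max_def)
  finally show ?thesis by (simp add: mult_left_mono)
qed

lemma abs_mult_diff_powr_le:
  fixes a b c d K p :: real
  assumes "0 \<le> p" and "\<bar>a\<bar> \<le> K"
  shows "\<bar>a * c - b * d\<bar> powr p \<le> 2 powr p * (K powr p * \<bar>c - d\<bar> powr p + \<bar>d\<bar> powr p * \<bar>a - b\<bar> powr p)"
proof -
  have "a * c - b * d = a * (c - d) + d * (a - b)" by (simp add: algebra_simps)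
  then have "\<bar>a * c - b * d\<bar> powr p \<le> 2 powr p * (\<bar>a * (c - d)\<bar> powr p + \<bar>d * (a - b)\<bar> powr p)"
    using abs_add_powr_le[OF assms(1)] by simp
  also have "\<dots> \<le> 2 powr p * (K powr p * \<bar>c - d\<bar> powr p + \<bar>d\<bar> powr p * \<bar>a - b\<bar> powr p)"
    using assms by (auto simp: abs_mult powr_mult intro!: mult_left_mono mult_right_mono powr_mono2)
  finally show ?thesis .
qed

definition convexity_gap :: "real \<Rightarrow> real \<Rightarrow> real" where
  "convexity_gap p u = (1 + u powr p) / 2 - ((1 + u) / 2) powr p"

lemma convexity_gap_has_derivative:
  assumes "0 < z"
  shows "(convexity_gap p has_real_derivative
            p / 2 * z powr (p - 1) - p / 2 * ((1 + z) / 2) powr (p - 1)) (at z)"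
proof -
  have "((\<lambda>u. (1 + u) / 2) has_real_derivative 1 / 2) (at z)"
    by (rule derivative_eq_intros refl | simp)+
  moreover have "((\<lambda>w. w powr p) has_real_derivative p * ((1 + z) / 2) powr (p - 1)) (at ((1 + z) / 2))"
    using assms by (intro has_real_derivative_powr) auto
  ultimately have "((\<lambda>u. ((1 + u) / 2) powr p) has_real_derivative
      p * ((1 + z) / 2) powr (p - 1) * (1 / 2)) (at z)"
    by (rule DERIV_chain2[rotated])
  moreover have "((\<lambda>u. (1 + u powr p) / 2) has_real_derivative p * z powr (p - 1) / 2) (at z)"
    using has_real_derivative_powr[OF assms, of p] assms by (auto intro!: derivative_eq_intros)
  ultimately show ?thesis
    unfolding convexity_gap_def[abs_def] by (auto dest: DERIV_diff simp: algebra_simps)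
qed

lemma convexity_gap_strict_decreasing:
  assumes p: "1 < p" and st: "0 < s" "s < t" "t \<le> 1"
  shows "convexity_gap p t < convexity_gap p s"
proof -
  obtain z where z: "s < z" "z < t" and mvt: "convexity_gap p t - convexity_gap p s
      = (t - s) * (p / 2 * z powr (p - 1) - p / 2 * ((1 + z) / 2) powr (p - 1))"
    using MVT2[OF st(2), of "convexity_gap p"
        "\<lambda>z. p / 2 * z powr (p - 1) - p / 2 * ((1 + z) / 2) powr (p - 1)"]
      convexity_gap_has_derivative st by force
  have "z powr (p - 1) < ((1 + z) / 2) powr (p - 1)"
    using z st p by (intro powr_less_mono2) auto
  then have "p / 2 * z powr (p - 1) - p / 2 * ((1 + z) / 2) powr (p - 1) < 0"
    using p by (simp add: algebra_simps)
  then have "(t - s) * (p / 2 * z powr (p - 1) - p / 2 * ((1 + z) / 2) powr (p - 1)) < 0"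
    using st by (intro mult_pos_neg) auto
  then show ?thesis using mvt by simp
qed

lemma convexity_gap_pos:
  assumes p: "1 < p" and u: "0 \<le> u" "u < 1"
  shows "0 < convexity_gap p u"
proof (cases "u = 0")
  case True
  have "2 powr 1 < 2 powr p" using p by (intro powr_less_mono) auto
  then have "(1 / 2) powr p < 1 / 2" by (simp add: powr_divide divide_less_eq)
  then show ?thesis using True p by (simp add: convexity_gap_def)
next
  case False
  then have "convexity_gap p 1 < convexity_gap p u"
    using p u by (intro convexity_gap_strict_decreasing) auto
  then show ?thesis by (simp add: convexity_gap_def)
qed

lemma abs_midpoint_powr_scale:
  fixes a b k p :: real
  assumes "a \<noteq> 0" and "\<bar>(1 + b / a) / 2\<bar> powr p \<le> k * ((1 + \<bar>b / a\<bar> powr p) / 2)"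
  shows "\<bar>(a + b) / 2\<bar> powr p \<le> k * ((\<bar>a\<bar> powr p + \<bar>b\<bar> powr p) / 2)"
proof -
  have "(a + b) / 2 = a * ((1 + b / a) / 2)" using assms(1) by (simp add: field_simps)
  then have "\<bar>(a + b) / 2\<bar> powr p = \<bar>a\<bar> powr p * \<bar>(1 + b / a) / 2\<bar> powr p"
    by (metis abs_mult powr_mult abs_ge_zero)
  also have "\<dots> \<le> \<bar>a\<bar> powr p * (k * ((1 + \<bar>b / a\<bar> powr p) / 2))"
    using assms(2) by (rule mult_left_mono) simp
  also have "\<dots> = k * ((\<bar>a\<bar> powr p + \<bar>a\<bar> powr p * \<bar>b / a\<bar> powr p) / 2)"
    by (simp add: algebra_simps)
  also have "\<bar>a\<bar> powr p * \<bar>b / a\<bar> powr p = \<bar>b\<bar> powr p"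
  proof -
    have "\<bar>a\<bar> * \<bar>b / a\<bar> = \<bar>b\<bar>" using assms(1) by (simp add: abs_divide)
    then show ?thesis by (metis powr_mult abs_ge_zero)
  qed
  finally show ?thesis .
qed

lemma abs_midpoint_powr_le:
  fixes a b p :: real
  assumes p: "1 < p"
  shows "\<bar>(a + b) / 2\<bar> powr p \<le> (\<bar>a\<bar> powr p + \<bar>b\<bar> powr p) / 2"
proof -
  have "\<bar>(a + b) / 2\<bar> powr p \<le> 1 * ((\<bar>a\<bar> powr p + \<bar>b\<bar> powr p) / 2)"
    if ba: "\<bar>b\<bar> \<le> \<bar>a\<bar>" for a b :: real
  proof (cases "a = 0")
    case True
    then show ?thesis using ba by simp
  next
    case False
    define s where "s = b / a"
    have s: "\<bar>s\<bar> \<le> 1" unfolding s_def using ba False by (simp add: abs_divide divide_le_eq_1)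
    have "\<bar>(1 + s) / 2\<bar> powr p \<le> ((1 + \<bar>s\<bar>) / 2) powr p"
      using p by (intro powr_mono2) auto
    also have "\<dots> \<le> (1 + \<bar>s\<bar> powr p) / 2"
      using convexity_gap_pos[OF p, of "\<bar>s\<bar>"] s by (cases "\<bar>s\<bar> = 1") (auto simp: convexity_gap_def)
    finally show ?thesis using False unfolding s_def by (intro abs_midpoint_powr_scale) auto
  qed
  from this[of a b] this[of b a] show ?thesis
    by (cases "\<bar>b\<bar> \<le> \<bar>a\<bar>") (auto simp: add.commute)
qed

lemma abs_midpoint_powr_deficit_normalized:
  fixes p d :: real
  assumes p: "1 < p" and d: "0 < d" "d \<le> 1"
  obtains r where "0 < r"
    "\<And>s. -1 \<le> s \<Longrightarrow> s \<le> 1 - d \<Longrightarrow> \<bar>(1 + s) / 2\<bar> powr p \<le> (1 - r) * ((1 + \<bar>s\<bar> powr p) / 2)"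
proof
  define r1 where "r1 = 1 - 2 * (1 / 2) powr p"
  define r2 where "r2 = convexity_gap p (1 - d)"
  have "2 powr 1 < 2 powr p" using p by (intro powr_less_mono) auto
  then have r1: "0 < r1" unfolding r1_def by (simp add: powr_divide divide_less_eq)
  have r2: "0 < r2" unfolding r2_def using d p by (intro convexity_gap_pos) auto
  show "0 < min r1 r2" using r1 r2 by simp
  fix s :: real assume s: "-1 \<le> s" "s \<le> 1 - d"
  show "\<bar>(1 + s) / 2\<bar> powr p \<le> (1 - min r1 r2) * ((1 + \<bar>s\<bar> powr p) / 2)"
  proof (cases "s \<le> 0")
    case True
    have "\<bar>(1 + s) / 2\<bar> powr p \<le> (1 / 2) powr p" using p s True by (intro powr_mono2) auto
    also have "\<dots> = (1 - r1) * (1 / 2)" unfolding r1_def by simp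
    also have "\<dots> \<le> (1 - min r1 r2) * ((1 + \<bar>s\<bar> powr p) / 2)"
      using r1 unfolding r1_def by (intro mult_mono) (auto simp: min.coboundedI1)
    finally show ?thesis .
  next
    case False
    have "r2 \<le> convexity_gap p s"
      unfolding r2_def using convexity_gap_strict_decreasing[OF p, of s "1 - d"] s False d
      by (cases "s = 1 - d") auto
    moreover have "s powr p \<le> 1" using s False d p by (auto intro: powr_le1)
    then have "min r1 r2 * ((1 + s powr p) / 2) \<le> min r1 r2 * 1"
      using r1 r2 by (intro mult_left_mono) auto
    ultimately have "((1 + s) / 2) powr p \<le> (1 + s powr p) / 2 - min r1 r2 * ((1 + s powr p) / 2)"
      unfolding convexity_gap_def by linarith
    also have "\<dots> = (1 - min r1 r2) * ((1 + s powr p) / 2)" by (simp add: left_diff_distrib)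
    finally show ?thesis using False by simp
  qed
qed

lemma abs_midpoint_powr_deficit:
  fixes p d :: real
  assumes p: "1 < p" and d: "0 < d" "d \<le> 1"
  obtains r where "0 < r" "\<And>a b. d * max \<bar>a\<bar> \<bar>b\<bar> \<le> \<bar>a - b\<bar> \<Longrightarrow>
      \<bar>(a + b) / 2\<bar> powr p \<le> (1 - r) * ((\<bar>a\<bar> powr p + \<bar>b\<bar> powr p) / 2)"
proof -
  obtain r where r: "0 < r" and normalized: "\<And>s. -1 \<le> s \<Longrightarrow> s \<le> 1 - d \<Longrightarrow>
      \<bar>(1 + s) / 2\<bar> powr p \<le> (1 - r) * ((1 + \<bar>s\<bar> powr p) / 2)"
    using abs_midpoint_powr_deficit_normalized[OF p d] by blast
  have ordered: "\<bar>(a + b) / 2\<bar> powr p \<le> (1 - r) * ((\<bar>a\<bar> powr p + \<bar>b\<bar> powr p) / 2)"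
    if ba: "\<bar>b\<bar> \<le> \<bar>a\<bar>" and sep: "d * \<bar>a\<bar> \<le> \<bar>a - b\<bar>" for a b :: real
  proof (cases "a = 0")
    case True
    then show ?thesis using ba by simp
  next
    case a: False
    define s where "s = b / a"
    have s: "\<bar>s\<bar> \<le> 1" unfolding s_def using ba a by (simp add: abs_divide divide_le_eq_1)
    have "\<bar>a - b\<bar> = \<bar>a\<bar> * \<bar>1 - s\<bar>" unfolding s_def using a by (simp add: abs_mult[symmetric] field_simps)
    then have "d \<le> \<bar>1 - s\<bar>" using sep a by simp
    then have "s \<le> 1 - d" using s by auto
    moreover have "-1 \<le> s" using s by auto
    ultimately have "\<bar>(1 + s) / 2\<bar> powr p \<le> (1 - r) * ((1 + \<bar>s\<bar> powr p) / 2)"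
      by (intro normalized)
    then show ?thesis using abs_midpoint_powr_scale[OF a] unfolding s_def by blast
  qed
  have "\<bar>(a + b) / 2\<bar> powr p \<le> (1 - r) * ((\<bar>a\<bar> powr p + \<bar>b\<bar> powr p) / 2)"
    if sep: "d * max \<bar>a\<bar> \<bar>b\<bar> \<le> \<bar>a - b\<bar>" for a b :: real
  proof (cases "\<bar>b\<bar> \<le> \<bar>a\<bar>")
    case True
    moreover have "d * \<bar>a\<bar> \<le> \<bar>a - b\<bar>" using sep True by (simp add: max_def)
    ultimately show ?thesis by (rule ordered)
  next
    case False
    moreover have "d * \<bar>b\<bar> \<le> \<bar>b - a\<bar>" using sep False by (simp add: max_def abs_minus_commute)
    ultimately have "\<bar>(b + a) / 2\<bar> powr p \<le> (1 - r) * ((\<bar>b\<bar> powr p + \<bar>a\<bar> powr p) / 2)"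
      by (intro ordered) auto
    then show ?thesis by (simp add: add.commute)
  qed
  with r that show ?thesis by blast
qed

lemma abs_powr_uniformly_convex:
  fixes p \<eta> :: real
  assumes p: "1 < p" and \<eta>: "0 < \<eta>"
  obtains C where "0 < C" "\<And>a b. \<bar>a - b\<bar> powr p + C * \<bar>(a + b) / 2\<bar> powr p
      \<le> (C / 2 + \<eta>) * (\<bar>a\<bar> powr p + \<bar>b\<bar> powr p)"
proof -
  define d where "d = min 1 (\<eta> powr (1 / p))"
  have d: "0 < d" "d \<le> 1" unfolding d_def using \<eta> by auto
  have dp: "d powr p \<le> \<eta>"
  proof -
    have "d powr p \<le> (\<eta> powr (1 / p)) powr p" unfolding d_def using p \<eta> by (intro powr_mono2) auto
    also have "\<dots> = \<eta>" using p \<eta> by (simp add: powr_powr)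
    finally show ?thesis .
  qed
  obtain r where r: "0 < r" and deficit: "\<And>a b. d * max \<bar>a\<bar> \<bar>b\<bar> \<le> \<bar>a - b\<bar> \<Longrightarrow>
      \<bar>(a + b) / 2\<bar> powr p \<le> (1 - r) * ((\<bar>a\<bar> powr p + \<bar>b\<bar> powr p) / 2)"
    using abs_midpoint_powr_deficit[OF p d] by blast
  define C where "C = 2 * 2 powr p / r"
  have C: "0 < C" unfolding C_def using r by simp
  have "\<bar>a - b\<bar> powr p + C * \<bar>(a + b) / 2\<bar> powr p \<le> (C / 2 + \<eta>) * (\<bar>a\<bar> powr p + \<bar>b\<bar> powr p)"
    for a b :: real
  proof -
    define S where "S = \<bar>a\<bar> powr p + \<bar>b\<bar> powr p"
    have S: "0 \<le> S" "max \<bar>a\<bar> \<bar>b\<bar> powr p \<le> S" unfolding S_def by (auto simp: max_def)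
    show ?thesis
    proof (cases "d * max \<bar>a\<bar> \<bar>b\<bar> \<le> \<bar>a - b\<bar>")
      case True
      \<comment> \<open>far apart: the convexity deficit pays for the difference term\<close>
      have "\<bar>a - b\<bar> powr p \<le> 2 powr p * S"
        unfolding S_def using abs_add_powr_le[of p a "- b"] p by simp
      moreover have "C * \<bar>(a + b) / 2\<bar> powr p \<le> C * ((1 - r) * (S / 2))"
        unfolding S_def using deficit[OF True] C by (intro mult_left_mono) auto
      moreover have "2 powr p * S + C * ((1 - r) * (S / 2)) = C / 2 * S"
        unfolding C_def using r by (simp add: field_simps)
      moreover have "(C / 2 + \<eta>) * S = C / 2 * S + \<eta> * S" by (simp add: distrib_right)
      moreover have "0 \<le> \<eta> * S" using \<eta> S by simp
      ultimately show ?thesis unfolding S_def[symmetric] by linarith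
    next
      case False
      \<comment> \<open>close together: the difference term is at most \<open>\<eta> S\<close>\<close>
      have "\<bar>a - b\<bar> powr p \<le> (d * max \<bar>a\<bar> \<bar>b\<bar>) powr p"
        using False p by (intro powr_mono2) auto
      also have "\<dots> = d powr p * max \<bar>a\<bar> \<bar>b\<bar> powr p" using d by (simp add: powr_mult)
      also have "\<dots> \<le> \<eta> * S" using dp \<eta> S by (intro mult_mono) auto
      finally have "\<bar>a - b\<bar> powr p \<le> \<eta> * S" .
      moreover have "C * \<bar>(a + b) / 2\<bar> powr p \<le> C * (S / 2)"
        unfolding S_def using abs_midpoint_powr_le[OF p, of a b] C by (intro mult_left_mono) auto
      ultimately show ?thesis unfolding S_def[symmetric] by (simp add: algebra_simps)
    qed
  qed
  with C that show ?thesis by blast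
qed

section \<open>The Dirichlet sum of a connected weighted graph\<close>

locale p_energy_graph =
  fixes b :: "'x \<Rightarrow> 'x \<Rightarrow> real" and p :: real
  assumes b_sym: "\<And>x y. b x y = b y x"
    and b_nonneg: "\<And>x y. 0 \<le> b x y"
    and b_summable: "\<And>x. b x summable_on UNIV"
    and connected: "\<And>x y. (x, y) \<in> {(x, y). 0 < b x y}\<^sup>*"
    and p_gt_1: "1 < p"
    and countable_vertices: "countable (UNIV :: 'x set)"
begin

definition W :: "('x \<Rightarrow> real) \<Rightarrow> ennreal" where
  "W f = infsum (\<lambda>(x, y). ennreal (b x y * \<bar>f x - f y\<bar> powr p)) UNIV"

lemma W_le_lincomb:
  assumes "\<And>x y. b x y * \<bar>h x - h y\<bar> powr p \<le>
      c1 * (b x y * \<bar>f x - f y\<bar> powr p) + c2 * (b x y * \<bar>g x - g y\<bar> powr p)"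
    and "0 \<le> c1" "0 \<le> c2"
  shows "W h \<le> ennreal c1 * W f + ennreal c2 * W g"
  unfolding W_def case_prod_beta using assms b_nonneg by (intro infsum_ennreal_le_lincomb) auto

lemma W_mono_grad:
  assumes "\<And>x y. \<bar>g x - g y\<bar> \<le> \<bar>f x - f y\<bar>"
  shows "W g \<le> W f"
proof -
  have "W g \<le> ennreal 1 * W f + ennreal 0 * W f"
    using assms b_nonneg p_gt_1 by (intro W_le_lincomb) (auto intro!: mult_left_mono powr_mono2)
  then show ?thesis by simp
qed

lemma W_cong_grad:
  assumes "\<And>x y. \<bar>g x - g y\<bar> = \<bar>f x - f y\<bar>"
  shows "W g = W f"
  using W_mono_grad assms by (metis order.eq_iff order_refl)

lemma W_const: "W (\<lambda>x. k) = 0"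
  unfolding W_def using p_gt_1 by (auto intro: infsum_0)

lemma W_add:
  "W (\<lambda>x. f x + g x) \<le> ennreal (2 powr p) * W f + ennreal (2 powr p) * W g"
proof (rule W_le_lincomb)
  fix x y
  have "\<bar>(f x + g x) - (f y + g y)\<bar> powr p \<le> 2 powr p * (\<bar>f x - f y\<bar> powr p + \<bar>g x - g y\<bar> powr p)"
    using abs_add_powr_le[of p "f x - f y" "g x - g y"] p_gt_1 by (simp add: algebra_simps)
  from mult_left_mono[OF this b_nonneg[of x y]]
  show "b x y * \<bar>f x + g x - (f y + g y)\<bar> powr p \<le>
      2 powr p * (b x y * \<bar>f x - f y\<bar> powr p) + 2 powr p * (b x y * \<bar>g x - g y\<bar> powr p)"
    by (simp add: algebra_simps)
qed auto

lemma W_diff: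
  "W (\<lambda>x. f x - g x) \<le> ennreal (2 powr p) * W f + ennreal (2 powr p) * W g"
  using W_add[of f "\<lambda>x. - g x"] W_cong_grad[of "\<lambda>x. - g x" g] by (simp add: abs_minus_commute)

lemma W_scale: "W (\<lambda>x. t * f x) = ennreal (\<bar>t\<bar> powr p) * W f"
proof -
  have "\<bar>t * f x - t * f y\<bar> = \<bar>t\<bar> * \<bar>f x - f y\<bar>" for x y
    by (simp add: abs_mult[symmetric] right_diff_distrib)
  then have scale: "ennreal (b x y * \<bar>t * f x - t * f y\<bar> powr p)
      = ennreal (\<bar>t\<bar> powr p) * ennreal (b x y * \<bar>f x - f y\<bar> powr p)" for x y
    by (simp add: powr_mult ennreal_mult'[symmetric] mult.left_commute)
  show ?thesis
    unfolding W_def case_prod_beta scale by (rule infsum_cmult_right_ennreal)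
qed

lemma W_max: "W (\<lambda>x. max (f x) (g x)) \<le> W f + W g"
proof -
  have "W (\<lambda>x. max (f x) (g x)) \<le> ennreal 1 * W f + ennreal 1 * W g"
  proof (rule W_le_lincomb)
    fix x y
    have "\<bar>max (f x) (g x) - max (f y) (g y)\<bar> powr p \<le> max \<bar>f x - f y\<bar> \<bar>g x - g y\<bar> powr p"
      using p_gt_1 by (intro powr_mono2) auto
    also have "\<dots> \<le> \<bar>f x - f y\<bar> powr p + \<bar>g x - g y\<bar> powr p" by (auto simp: max_def)
    finally show "b x y * \<bar>max (f x) (g x) - max (f y) (g y)\<bar> powr p
        \<le> 1 * (b x y * \<bar>f x - f y\<bar> powr p) + 1 * (b x y * \<bar>g x - g y\<bar> powr p)"
      using mult_left_mono b_nonneg by (fastforce simp: distrib_left[symmetric])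
  qed auto
  then show ?thesis by simp
qed

lemma W_clip: "W (\<lambda>x. min (max (f x) 0) 1) \<le> W f"
  by (rule W_mono_grad) auto

lemma W_edge_le: "ennreal (b x y * \<bar>f x - f y\<bar> powr p) \<le> W f"
proof -
  have "infsum (\<lambda>(x, y). ennreal (b x y * \<bar>f x - f y\<bar> powr p)) {(x, y)} \<le> W f"
    unfolding W_def by (rule infsum_mono_neutral) auto
  then show ?thesis by simp
qed

lemma sum_edges_from_le:
  assumes "finite S" "finite F"
  shows "(\<Sum>z\<in>F. b (fst z) (snd z) * of_bool (fst z \<in> S)) \<le> (\<Sum>x\<in>S. infsum (b x) UNIV)"
proof -
  have "(\<Sum>z\<in>F. b (fst z) (snd z) * of_bool (fst z \<in> S)) = (\<Sum>z\<in>F \<inter> {z. fst z \<in> S}. b (fst z) (snd z))"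
    using assms(2) by (auto simp: sum.inter_restrict intro!: sum.cong)
  also have "\<dots> \<le> (\<Sum>z\<in>S \<times> snd ` F. b (fst z) (snd z))"
    using assms b_nonneg by (intro sum_mono2) force+
  also have "\<dots> = (\<Sum>x\<in>S. \<Sum>y\<in>snd ` F. b x y)"
    by (simp add: sum.cartesian_product case_prod_beta)
  also have "\<dots> \<le> (\<Sum>x\<in>S. infsum (b x) UNIV)"
  proof (rule sum_mono)
    fix x
    have "infsum (b x) (snd ` F) \<le> infsum (b x) UNIV"
      using assms(2) b_summable b_nonneg by (intro infsum_mono_neutral) auto
    then show "(\<Sum>y\<in>snd ` F. b x y) \<le> infsum (b x) UNIV" using assms(2) by simp
  qed
  finally show ?thesis .
qed

lemma W_fin_supp:
  assumes "fin_supp f"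
  shows "W f < \<infinity>"
proof -
  define S where "S = {x. f x \<noteq> 0}"
  have S: "finite S" using assms unfolding S_def fin_supp_def .
  define A where "A = 2 * (\<Sum>x\<in>S. \<bar>f x\<bar>)"
  define R where "R = (\<Sum>x\<in>S. infsum (b x) UNIV)"
  let ?out = "\<lambda>z. b (fst z) (snd z) * of_bool (fst z \<in> S)"
  have f_le: "\<bar>f x\<bar> \<le> (\<Sum>x\<in>S. \<bar>f x\<bar>)" for x
    using S by (cases "x \<in> S") (auto simp: S_def intro: member_le_sum sum_nonneg)
  have term_le: "b x y * \<bar>f x - f y\<bar> powr p \<le> A powr p * (?out (x, y) + ?out (y, x))" for x y
  proof (cases "x \<in> S \<or> y \<in> S")
    case True
    have "\<bar>f x - f y\<bar> powr p \<le> A powr p"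
      using f_le[of x] f_le[of y] p_gt_1 unfolding A_def by (intro powr_mono2) auto
    then have "b x y * \<bar>f x - f y\<bar> powr p \<le> b x y * A powr p" by (simp add: b_nonneg mult_left_mono)
    moreover have "0 \<le> A powr p * b x y" using b_nonneg by simp
    ultimately show ?thesis using True b_sym[of x y] by (auto simp: algebra_simps)
  next
    case False
    then show ?thesis using p_gt_1 b_nonneg by (auto simp: S_def)
  qed
  have "W f \<le> ennreal (A powr p * (R + R))"
    unfolding W_def
  proof (rule infsum_le_finite_sums)
    fix F :: "('x \<times> 'x) set" assume F: "finite F"
    have swap: "(\<Sum>z\<in>F. ?out (snd z, fst z)) = (\<Sum>z\<in>prod.swap ` F. ?out z)"
      by (simp add: sum.reindex)
    have "(\<Sum>z\<in>F. case z of (x, y) \<Rightarrow> ennreal (b x y * \<bar>f x - f y\<bar> powr p))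
        = ennreal (\<Sum>z\<in>F. b (fst z) (snd z) * \<bar>f (fst z) - f (snd z)\<bar> powr p)"
      using b_nonneg by (subst sum_ennreal[symmetric]) (auto simp: case_prod_unfold)
    also have "\<dots> \<le> ennreal (\<Sum>z\<in>F. A powr p * (?out z + ?out (snd z, fst z)))"
      using term_le by (intro ennreal_leI sum_mono) simp
    also have "\<dots> = ennreal (A powr p * ((\<Sum>z\<in>F. ?out z) + (\<Sum>z\<in>F. ?out (snd z, fst z))))"
      by (simp only: sum.distrib[symmetric] sum_distrib_left)
    also have "\<dots> \<le> ennreal (A powr p * (R + R))"
      unfolding swap R_def using S F
      by (intro ennreal_leI mult_left_mono add_mono sum_edges_from_le) auto
    finally show "(\<Sum>z\<in>F. case z of (x, y) \<Rightarrow> ennreal (b x y * \<bar>f x - f y\<bar> powr p))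
        \<le> ennreal (A powr p * (R + R))" .
  qed auto
  then show ?thesis by (simp add: order_le_less_trans)
qed

lemma W_lsc:
  assumes lim: "\<And>x. (\<lambda>n. g n x) \<longlonglongrightarrow> f x"
    and ev: "eventually (\<lambda>n. W (g n) \<le> e) sequentially"
  shows "W f \<le> e"
  unfolding W_def
proof (rule infsum_le_finite_sums)
  fix F :: "('x \<times> 'x) set" assume F: "finite F"
  define T where "T = (\<lambda>k (z::'x \<times> 'x). ennreal (b (fst z) (snd z) * \<bar>k (fst z) - k (snd z)\<bar> powr p))"
  have "(\<lambda>n. sum (T (g n)) F) \<longlonglongrightarrow> sum (T f) F"
    unfolding T_def using p_gt_1
    by (intro tendsto_sum tendsto_ennrealI tendsto_mult tendsto_const tendsto_powr' tendsto_rabs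
        tendsto_diff lim) auto
  moreover have "eventually (\<lambda>n. sum (T (g n)) F \<le> e) sequentially"
    using ev
  proof eventually_elim
    case (elim n)
    have "sum (T (g n)) F = infsum (\<lambda>(x, y). ennreal (b x y * \<bar>g n x - g n y\<bar> powr p)) F"
      using F by (simp add: T_def case_prod_unfold)
    also have "\<dots> \<le> W (g n)" unfolding W_def by (rule infsum_mono_neutral) auto
    finally show ?case using elim by simp
  qed
  ultimately have "sum (T f) F \<le> e" by (rule tendsto_upperbound) auto
  then show "sum (\<lambda>(x, y). ennreal (b x y * \<bar>f x - f y\<bar> powr p)) F \<le> e"
    by (simp add: T_def case_prod_unfold)
qed auto

lemma diff_powr_le_W: "\<exists>C>0. \<forall>f. ennreal (\<bar>f x - f y\<bar> powr p) \<le> ennreal C * W f"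
  using connected[of x y]
proof (induction rule: rtrancl_induct)
  case base
  show ?case using p_gt_1 by (intro exI[of _ 1]) auto
next
  case (step y z)
  from step.IH obtain C where C: "C > 0" "\<And>f. ennreal (\<bar>f x - f y\<bar> powr p) \<le> ennreal C * W f"
    by blast
  have byz: "0 < b y z" using step.hyps(2) by simp
  \<comment> \<open>the new edge y z is paid for by its own term \<open>b y z \<bar>f y - f z\<bar>\<^sup>p\<close> of W\<close>
  have "ennreal (\<bar>f x - f z\<bar> powr p) \<le> ennreal (2 powr p * (C + 1 / b y z)) * W f" for f
  proof -
    have "\<bar>f x - f z\<bar> powr p \<le> 2 powr p * (\<bar>f x - f y\<bar> powr p + \<bar>f y - f z\<bar> powr p)"
      using abs_add_powr_le[of p "f x - f y" "f y - f z"] p_gt_1 by simp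
    then have "ennreal (\<bar>f x - f z\<bar> powr p) \<le> ennreal (2 powr p) * (ennreal (\<bar>f x - f y\<bar> powr p)
        + ennreal (1 / b y z) * ennreal (b y z * \<bar>f y - f z\<bar> powr p))"
      using byz by (simp add: ennreal_mult'[symmetric] ennreal_plus[symmetric] del: ennreal_plus)
    also have "\<dots> \<le> ennreal (2 powr p) * (ennreal C * W f + ennreal (1 / b y z) * W f)"
      by (intro mult_left_mono add_mono C(2) W_edge_le) auto
    also have "\<dots> = ennreal (2 powr p * (C + 1 / b y z)) * W f"
      using C byz by (simp add: distrib_right ennreal_plus ennreal_mult mult.assoc)
    finally show ?thesis .
  qed
  moreover have "0 < 2 powr p * (C + 1 / b y z)" using C byz by (intro mult_pos_pos add_pos_pos) auto
  ultimately show ?case by blast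
qed

lemma W_tendsto_0_imp_tendsto:
  assumes W0: "(\<lambda>n. W (h n)) \<longlonglongrightarrow> 0" and at_y: "(\<lambda>n. h n y) \<longlonglongrightarrow> a"
  shows "(\<lambda>n. h n x) \<longlonglongrightarrow> a"
proof -
  obtain C where C: "\<And>f. ennreal (\<bar>f x - f y\<bar> powr p) \<le> ennreal C * W f"
    using diff_powr_le_W[of x y] by blast
  have "(\<lambda>n. ennreal C * W (h n)) \<longlonglongrightarrow> ennreal C * 0"
    by (rule ennreal_tendsto_cmult[OF _ W0]) simp
  then have "(\<lambda>n. ennreal (\<bar>h n x - h n y\<bar> powr p)) \<longlonglongrightarrow> 0"
    using tendsto_sandwich[of "\<lambda>_. 0" "\<lambda>n. ennreal (\<bar>h n x - h n y\<bar> powr p)" sequentially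
        "\<lambda>n. ennreal C * W (h n)" 0] C by simp
  then have "(\<lambda>n. \<bar>h n x - h n y\<bar> powr p) \<longlonglongrightarrow> 0"
    by (simp add: ennreal_tendsto_0_iff)
  then have "(\<lambda>n. \<bar>h n x - h n y\<bar>) \<longlonglongrightarrow> 0"
    using tendsto_powr_0_iff[of "\<lambda>n. \<bar>h n x - h n y\<bar>" sequentially p] p_gt_1 by simp
  then have "(\<lambda>n. h n x - h n y) \<longlonglongrightarrow> 0"
    by (simp add: tendsto_rabs_zero_iff)
  from tendsto_add[OF this at_y] show ?thesis by simp
qed

lemma W_uniformly_convex:
  assumes \<eta>: "0 < \<eta>"
  obtains C where "0 < C" "\<And>f g. W (\<lambda>x. f x - g x) + ennreal C * W (\<lambda>x. (f x + g x) / 2)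
      \<le> ennreal (C / 2 + \<eta>) * (W f + W g)"
proof -
  obtain C where C: "0 < C" and pw: "\<And>a b. \<bar>a - b\<bar> powr p + C * \<bar>(a + b) / 2\<bar> powr p
      \<le> (C / 2 + \<eta>) * (\<bar>a\<bar> powr p + \<bar>b\<bar> powr p)"
    using abs_powr_uniformly_convex[OF p_gt_1 \<eta>] by blast
  have "W (\<lambda>x. f x - g x) + ennreal C * W (\<lambda>x. (f x + g x) / 2)
      \<le> ennreal (C / 2 + \<eta>) * (W f + W g)" for f g
  proof -
    define w where "w = (\<lambda>k (x, y). ennreal (b x y * \<bar>k x - k y\<bar> powr p))"
    have W_w: "W k = infsum (w k) UNIV" for k unfolding W_def w_def ..
    have "w (\<lambda>x. f x - g x) z + ennreal C * w (\<lambda>x. (f x + g x) / 2) z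
        \<le> ennreal (C / 2 + \<eta>) * (w f z + w g z)" for z
    proof -
      obtain x y where z: "z = (x, y)" by fastforce
      define A B where "A = f x - f y" and "B = g x - g y"
      have diff: "(f x - g x) - (f y - g y) = A - B"
        and mid: "(f x + g x) / 2 - (f y + g y) / 2 = (A + B) / 2"
        unfolding A_def B_def by (simp_all add: field_simps)
      have "b x y * \<bar>A - B\<bar> powr p + C * (b x y * \<bar>(A + B) / 2\<bar> powr p)
          \<le> (C / 2 + \<eta>) * (b x y * \<bar>A\<bar> powr p + b x y * \<bar>B\<bar> powr p)"
        using mult_left_mono[OF pw[of A B] b_nonneg[of x y]] by (simp add: algebra_simps)
      then show ?thesis
        unfolding z w_def case_prod_conv diff mid A_def[symmetric] B_def[symmetric]
        using C \<eta> b_nonneg[of x y]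
        by (simp add: ennreal_mult'[symmetric] ennreal_plus[symmetric] del: ennreal_plus)
    qed
    then have "infsum (\<lambda>z. w (\<lambda>x. f x - g x) z + ennreal C * w (\<lambda>x. (f x + g x) / 2) z) UNIV
        \<le> infsum (\<lambda>z. ennreal (C / 2 + \<eta>) * (w f z + w g z)) UNIV"
      by (intro infsum_mono) auto
    then show ?thesis
      unfolding W_w by (simp add: infsum_add infsum_cmult_right_ennreal)
  qed
  with C that show ?thesis by blast
qed

abbreviation E :: "('x \<Rightarrow> real) \<Rightarrow> ennreal" where
  "E \<equiv> energy b (\<lambda>_. 0) p"

lemma energy_eq_W: "E f = W f / 2"
  unfolding energy_def W_def by (simp add: infsum_0)

lemma W_eq_energy: "W f = 2 * E f"
  unfolding energy_eq_W by (simp add: ennreal_times_divide mult.commute[of 2] mult_divide_eq_ennreal)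

lemma energy_le_W: "E f \<le> W f"
  using mult_right_mono[of 1 2 "E f"] unfolding W_eq_energy by simp

lemma energy_less_top_iff: "E f < \<infinity> \<longleftrightarrow> W f < \<infinity>"
  unfolding W_eq_energy by (simp add: less_top[symmetric] ennreal_mult_eq_top_iff)

lemma mem_Dp_iff: "f \<in> Dp b (\<lambda>_. 0) p \<longleftrightarrow> W f < \<infinity>"
  unfolding Dp_def mem_Collect_eq by (rule energy_less_top_iff)

lemma normo_tendsto_0_iff:
  assumes fin: "\<And>n. W (h n) < \<infinity>"
  shows "(\<lambda>n. normo b (\<lambda>_. 0) p x0 (h n)) \<longlonglongrightarrow> 0
     \<longleftrightarrow> (\<lambda>n. W (h n)) \<longlonglongrightarrow> 0 \<and> (\<lambda>n. h n x0) \<longlonglongrightarrow> 0"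
proof -
  define e where "e = (\<lambda>n. enn2real (E (h n)))"
  define a where "a = (\<lambda>n. \<bar>h n x0\<bar> powr p)"
  have e0: "0 \<le> e n" and a0: "0 \<le> a n" for n unfolding e_def a_def by auto
  have "(\<lambda>n. normo b (\<lambda>_. 0) p x0 (h n)) = (\<lambda>n. (e n + a n) powr (1 / p))"
    unfolding normo_def e_def a_def ..
  then have "(\<lambda>n. normo b (\<lambda>_. 0) p x0 (h n)) \<longlonglongrightarrow> 0 \<longleftrightarrow> (\<lambda>n. e n + a n) \<longlonglongrightarrow> 0"
    using e0 a0 p_gt_1 by (simp add: tendsto_powr_0_iff add_nonneg_nonneg)
  also have "\<dots> \<longleftrightarrow> e \<longlonglongrightarrow> 0 \<and> a \<longlonglongrightarrow> 0"
  proof (intro iffI conjI)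
    assume "(\<lambda>n. e n + a n) \<longlonglongrightarrow> 0"
    then show "e \<longlonglongrightarrow> 0" "a \<longlonglongrightarrow> 0"
      using e0 a0 by (auto intro: tendsto_sandwich[of "\<lambda>_. 0" _ _ "\<lambda>n. e n + a n"] add_increasing add_increasing2)
  qed (auto intro: tendsto_add_zero)
  also have "e \<longlonglongrightarrow> 0 \<longleftrightarrow> (\<lambda>n. W (h n)) \<longlonglongrightarrow> 0"
  proof -
    have "E (h n) = ennreal (e n)" for n
      using fin[of n] unfolding e_def energy_less_top_iff[symmetric] by simp
    then have "e \<longlonglongrightarrow> 0 \<longleftrightarrow> (\<lambda>n. E (h n)) \<longlonglongrightarrow> 0" using e0 by (simp add: ennreal_tendsto_0_iff)
    also have "\<dots> \<longleftrightarrow> (\<lambda>n. W (h n)) \<longlonglongrightarrow> 0"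
    proof
      assume "(\<lambda>n. E (h n)) \<longlonglongrightarrow> 0"
      from ennreal_tendsto_cmult[OF _ this, of 2] show "(\<lambda>n. W (h n)) \<longlonglongrightarrow> 0"
        by (simp add: W_eq_energy)
    next
      assume "(\<lambda>n. W (h n)) \<longlonglongrightarrow> 0"
      with energy_le_W show "(\<lambda>n. E (h n)) \<longlonglongrightarrow> 0"
        using tendsto_sandwich[of "\<lambda>_. 0" "\<lambda>n. E (h n)" sequentially "\<lambda>n. W (h n)" 0] by simp
    qed
    finally show ?thesis .
  qed
  also have "a \<longlonglongrightarrow> 0 \<longleftrightarrow> (\<lambda>n. h n x0) \<longlonglongrightarrow> 0"
    unfolding a_def using p_gt_1 by (simp add: tendsto_powr_0_iff tendsto_rabs_zero_iff)
  finally show ?thesis .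
qed

section \<open>Capacity and parabolicity\<close>

(* twice the usual capacity, since W = 2 E_p *)
definition cap :: "'x set \<Rightarrow> ennreal" where
  "cap K = (INF \<phi>\<in>{\<phi>. fin_supp \<phi> \<and> (\<forall>x\<in>K. 1 \<le> \<phi> x)}. W \<phi>)"

lemma cap_le: "fin_supp \<phi> \<Longrightarrow> \<forall>x\<in>K. 1 \<le> \<phi> x \<Longrightarrow> cap K \<le> W \<phi>"
  unfolding cap_def by (rule INF_lower) simp

lemma cap_mono: "K \<subseteq> K' \<Longrightarrow> cap K \<le> cap K'"
  unfolding cap_def by (rule INF_superset_mono) auto

lemma cap_eq_0_iff: "cap K = 0 \<longleftrightarrow> (\<forall>e>0. \<exists>\<phi>. fin_supp \<phi> \<and> (\<forall>x\<in>K. 1 \<le> \<phi> x) \<and> W \<phi> < e)"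
  unfolding cap_def bot_ennreal[symmetric] INF_eq_bot_iff by (auto simp: bot_ennreal)

lemma p_parabolic_iff_cap: "p_parabolic b (\<lambda>_. 0) p \<longleftrightarrow> (\<forall>K. finite K \<longrightarrow> cap K = 0)"
proof -
  have "(INF \<phi>\<in>A. E \<phi>) = 0 \<longleftrightarrow> (INF \<phi>\<in>A. W \<phi>) = 0" for A
  proof
    assume E0: "(INF \<phi>\<in>A. E \<phi>) = 0"
    show "(INF \<phi>\<in>A. W \<phi>) = 0"
      unfolding bot_ennreal[symmetric] INF_eq_bot_iff
    proof (intro allI impI)
      fix e :: ennreal assume "bot < e"
      then have "0 < e / 2" by (simp add: bot_ennreal ennreal_zero_less_divide)
      then obtain \<phi> where "\<phi> \<in> A" "E \<phi> < e / 2"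
        using E0 unfolding bot_ennreal[symmetric] INF_eq_bot_iff by (auto simp: bot_ennreal)
      moreover have "2 * (e / 2) = e"
        by (simp add: ennreal_times_divide mult.commute[of 2] mult_divide_eq_ennreal)
      ultimately show "\<exists>\<phi>\<in>A. W \<phi> < e"
        unfolding W_eq_energy by (metis ennreal_mult_strict_left_mono zero_less_numeral ennreal_numeral_less_top)
    qed
  next
    assume "(INF \<phi>\<in>A. W \<phi>) = 0"
    with energy_le_W show "(INF \<phi>\<in>A. E \<phi>) = 0"
      by (metis INF_mono le_zero_eq order_refl)
  qed
  then show ?thesis unfolding p_parabolic_def cap_def by simp
qed

lemma eventually_cap_le_scaled:
  assumes "\<And>n. fin_supp (\<phi> n)" and "finite K" and "\<And>x. x \<in> K \<Longrightarrow> (\<lambda>n. \<phi> n x) \<longlonglongrightarrow> 1"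
  shows "\<forall>\<^sub>F n in sequentially. cap K \<le> ennreal (2 powr p) * W (\<phi> n)"
proof -
  have "\<forall>\<^sub>F n in sequentially. \<forall>x\<in>K. 1 / 2 < \<phi> n x"
    using assms(2,3) by (intro eventually_ball_finite ballI order_tendstoD(1)) auto
  then show ?thesis
  proof eventually_elim
    case (elim n)
    have "fin_supp (\<lambda>x. 2 * \<phi> n x)" using assms(1)[of n] unfolding fin_supp_def by simp
    with elim have "cap K \<le> W (\<lambda>x. 2 * \<phi> n x)" by (intro cap_le) auto
    then show ?case by (simp add: W_scale)
  qed
qed

lemma parabolicI:
  assumes "\<And>n. fin_supp (\<phi> n)" and "(\<lambda>n. W (\<phi> n)) \<longlonglongrightarrow> 0" and "(\<lambda>n. \<phi> n y) \<longlonglongrightarrow> 1"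
  shows "p_parabolic b (\<lambda>_. 0) p"
  unfolding p_parabolic_iff_cap
proof (intro allI impI)
  fix K :: "'x set" assume K: "finite K"
  have "(\<lambda>n. \<phi> n x) \<longlonglongrightarrow> 1" for x
    using assms(2,3) by (rule W_tendsto_0_imp_tendsto)
  then have "\<forall>\<^sub>F n in sequentially. cap K \<le> ennreal (2 powr p) * W (\<phi> n)"
    using assms(1) K by (intro eventually_cap_le_scaled)
  moreover have "(\<lambda>n. ennreal (2 powr p) * W (\<phi> n)) \<longlonglongrightarrow> ennreal (2 powr p) * 0"
    using assms(2) by (intro ennreal_tendsto_cmult) auto
  ultimately have "cap K \<le> 0"
    by (intro tendsto_lowerbound[of "\<lambda>n. ennreal (2 powr p) * W (\<phi> n)"]) auto
  then show "cap K = 0" by simp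
qed

lemma cap_le_of_tendsto_1:
  assumes "\<And>n. fin_supp (e n)" and "\<And>x. (\<lambda>n. e n x) \<longlonglongrightarrow> 1"
    and "\<forall>\<^sub>F n in sequentially. W (e n) \<le> M" and "finite K"
  shows "cap K \<le> ennreal (2 powr p) * M"
proof -
  have "\<forall>\<^sub>F n in sequentially. cap K \<le> ennreal (2 powr p) * W (e n) \<and> W (e n) \<le> M"
    using assms by (intro eventually_conj eventually_cap_le_scaled) auto
  then obtain n where "cap K \<le> ennreal (2 powr p) * W (e n)" "W (e n) \<le> M"
    unfolding eventually_sequentially by blast
  then show ?thesis by (meson mult_left_mono order_trans zero_le)
qed

lemma cap_less_imp_clipped:
  assumes "cap K < c"
  obtains \<psi> where "fin_supp \<psi>" "\<And>x. 0 \<le> \<psi> x \<and> \<psi> x \<le> 1" "\<And>x. x \<in> K \<Longrightarrow> \<psi> x = 1" "W \<psi> < c"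
proof -
  obtain \<phi> where \<phi>: "fin_supp \<phi>" "\<forall>x\<in>K. 1 \<le> \<phi> x" "W \<phi> < c"
    using assms unfolding cap_def INF_less_iff by blast
  show ?thesis
  proof
    show "fin_supp (\<lambda>x. min (max (\<phi> x) 0) 1)"
      using \<phi>(1) unfolding fin_supp_def by (rule finite_subset[rotated]) auto
    show "W (\<lambda>x. min (max (\<phi> x) 0) 1) < c" using W_clip \<phi>(3) by (rule le_less_trans)
  qed (use \<phi>(2) in auto)
qed

lemma parabolic_exhaustion:
  assumes P: "p_parabolic b (\<lambda>_. 0) p"
  obtains e where "\<And>n. fin_supp (e n)" "\<And>n x. 0 \<le> e n x \<and> e n x \<le> 1"
    "\<And>n x. e n x \<le> e (Suc n) x" "\<And>x. \<forall>\<^sub>F n in sequentially. e n x = 1"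
    "\<And>n. W (e n) < ennreal (1 / real (Suc n))"
proof -
  obtain F :: "nat \<Rightarrow> 'x set" where F: "\<And>n. finite (F n)" and "incseq F" and F_ev: "\<And>x. \<forall>\<^sub>F n in sequentially. x \<in> F n"
    using exhausting_finite_sets[OF countable_vertices] by auto
  have cap0: "cap K = 0" if "finite K" for K using P that unfolding p_parabolic_iff_cap by blast
  define good where "good n \<psi> \<longleftrightarrow> fin_supp \<psi> \<and> (\<forall>x. 0 \<le> \<psi> x \<and> \<psi> x \<le> 1)
      \<and> (\<forall>x\<in>F n. \<psi> x = 1) \<and> W \<psi> < ennreal (1 / real (Suc n))" for n \<psi>
  \<comment> \<open>each step is 1 on the support of the previous one, which makes the sequence increasing\<close>
  have "\<exists>e. \<forall>n. good n (e n) \<and> (\<forall>x. e n x \<le> e (Suc n) x)"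
  proof (rule dependent_nat_choice)
    have "cap (F 0) < ennreal (1 / real (Suc 0))" using cap0[OF F] by simp
    then obtain \<psi> where "fin_supp \<psi>" "\<And>x. 0 \<le> \<psi> x \<and> \<psi> x \<le> 1"
      "\<And>x. x \<in> F 0 \<Longrightarrow> \<psi> x = 1" "W \<psi> < ennreal (1 / real (Suc 0))"
      using cap_less_imp_clipped by blast
    then show "\<exists>\<psi>. good 0 \<psi>" unfolding good_def by (intro exI[of _ \<psi>]) auto
  next
    fix \<psi> n assume "good n \<psi>"
    then have fs: "fin_supp \<psi>" and le1: "\<And>x. \<psi> x \<le> 1" unfolding good_def by auto
    then have "finite (F (Suc n) \<union> {x. \<psi> x \<noteq> 0})" using F unfolding fin_supp_def by simp
    then have "cap (F (Suc n) \<union> {x. \<psi> x \<noteq> 0}) < ennreal (1 / real (Suc (Suc n)))"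
      using cap0 by simp
    then obtain \<psi>' where \<psi>': "fin_supp \<psi>'" "\<And>x. 0 \<le> \<psi>' x \<and> \<psi>' x \<le> 1"
      "\<And>x. x \<in> F (Suc n) \<union> {x. \<psi> x \<noteq> 0} \<Longrightarrow> \<psi>' x = 1" "W \<psi>' < ennreal (1 / real (Suc (Suc n)))"
      using cap_less_imp_clipped by blast
    have "\<psi> x \<le> \<psi>' x" for x using \<psi>'(2,3)[of x] le1[of x] by (cases "\<psi> x = 0") auto
    then show "\<exists>\<psi>'. good (Suc n) \<psi>' \<and> (\<forall>x. \<psi> x \<le> \<psi>' x)"
      using \<psi>' unfolding good_def by (intro exI[of _ \<psi>']) auto
  qed
  then obtain e where e: "\<And>n. good n (e n)" and mono: "\<And>n x. e n x \<le> e (Suc n) x" by blast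
  have fs: "fin_supp (e n)" and e01: "0 \<le> e n x \<and> e n x \<le> 1" and eF: "x \<in> F n \<Longrightarrow> e n x = 1"
    and eW: "W (e n) < ennreal (1 / real (Suc n))" for n x
    using e[of n] unfolding good_def by auto
  show ?thesis
  proof
    show "\<forall>\<^sub>F n in sequentially. e n x = 1" for x
      using F_ev[of x] by eventually_elim (rule eF)
  qed (fact fs e01 mono eW)+
qed

lemma W_tendsto_0_of_Cauchy:
  assumes lim: "\<And>x. (\<lambda>m. \<psi> m x) \<longlonglongrightarrow> 1"
    and Cauchy: "\<And>\<epsilon>. 0 < \<epsilon> \<Longrightarrow> \<exists>N. \<forall>n m. N \<le> n \<longrightarrow> n \<le> m \<longrightarrow> W (\<lambda>x. \<psi> n x - \<psi> m x) \<le> ennreal \<epsilon>"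
  shows "(\<lambda>n. W (\<psi> n)) \<longlonglongrightarrow> 0"
proof (rule order_tendstoI)
  fix a :: ennreal assume "0 < a"
  then obtain c where c: "0 < c" "c < a" using dense by blast
  have "c < \<infinity>" using c(2) by (rule order_less_le_trans) simp
  then have c_real: "c = ennreal (enn2real c)" and "0 < enn2real c"
    using c(1) by (simp_all add: less_top[symmetric] enn2real_positive_iff)
  then obtain N where N: "\<And>n m. N \<le> n \<Longrightarrow> n \<le> m \<Longrightarrow> W (\<lambda>x. \<psi> n x - \<psi> m x) \<le> ennreal (enn2real c)"
    using Cauchy by blast
  \<comment> \<open>let \<open>m \<rightarrow> \<infinity>\<close> and use lower semicontinuity\<close>
  have "W (\<psi> n) \<le> c" if "N \<le> n" for n
  proof -
    have "W (\<lambda>x. \<psi> n x - 1) \<le> ennreal (enn2real c)"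
    proof (rule W_lsc)
      show "(\<lambda>m. \<psi> n x - \<psi> m x) \<longlonglongrightarrow> \<psi> n x - 1" for x by (intro tendsto_diff tendsto_const lim)
      show "\<forall>\<^sub>F m in sequentially. W (\<lambda>x. \<psi> n x - \<psi> m x) \<le> ennreal (enn2real c)"
        unfolding eventually_sequentially using N that by blast
    qed
    moreover have "W (\<lambda>x. \<psi> n x - 1) = W (\<psi> n)" by (rule W_cong_grad) simp
    ultimately show ?thesis using c_real by simp
  qed
  then have "\<forall>n\<ge>N. W (\<psi> n) < a" using c(2) by (blast intro: le_less_trans)
  then show "\<forall>\<^sub>F n in sequentially. W (\<psi> n) < a" unfolding eventually_sequentially by blast
qed simp

lemma W_diff_plus_cap_le:
  assumes "0 < \<eta>"
  obtains C where "0 < C" "\<And>K \<psi> \<psi>'. fin_supp \<psi> \<Longrightarrow> fin_supp \<psi>' \<Longrightarrow> (\<And>x. x \<in> K \<Longrightarrow> \<psi> x = 1 \<and> \<psi>' x = 1) \<Longrightarrow>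
      W (\<lambda>x. \<psi> x - \<psi>' x) + ennreal C * cap K \<le> ennreal (C / 2 + \<eta>) * (W \<psi> + W \<psi>')"
proof -
  obtain C where C: "0 < C" and uc: "\<And>f g. W (\<lambda>x. f x - g x) + ennreal C * W (\<lambda>x. (f x + g x) / 2)
      \<le> ennreal (C / 2 + \<eta>) * (W f + W g)"
    using W_uniformly_convex[OF assms] by blast
  \<comment> \<open>the midpoint of two admissible functions is admissible\<close>
  have main: "W (\<lambda>x. \<psi> x - \<psi>' x) + ennreal C * cap K \<le> ennreal (C / 2 + \<eta>) * (W \<psi> + W \<psi>')"
    if fs: "fin_supp \<psi>" "fin_supp \<psi>'" and one: "\<And>x. x \<in> K \<Longrightarrow> \<psi> x = 1 \<and> \<psi>' x = 1" for K \<psi> \<psi>'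
  proof -
    have "fin_supp (\<lambda>x. (\<psi> x + \<psi>' x) / 2)"
      using fs unfolding fin_supp_def by (rule finite_subset[rotated, OF finite_UnI]) auto
    then have "cap K \<le> W (\<lambda>x. (\<psi> x + \<psi>' x) / 2)" using one by (intro cap_le) auto
    then have "ennreal C * cap K \<le> ennreal C * W (\<lambda>x. (\<psi> x + \<psi>' x) / 2)" by (rule mult_left_mono) simp
    then show ?thesis using uc[of \<psi> \<psi>'] by (meson add_left_mono order_trans)
  qed
  from C main show ?thesis by (rule that)
qed

lemma near_minimizers_Cauchy:
  assumes fs: "\<And>n. fin_supp (\<psi> n)" and F: "incseq F" and one: "\<And>n x. x \<in> F n \<Longrightarrow> \<psi> n x = 1"
    and cap_v: "\<And>n. cap (F n) = ennreal (v n)" and v0: "\<And>n. 0 \<le> v n" and v_lim: "v \<longlonglongrightarrow> l" and v_le: "\<And>n. v n \<le> l"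
    and W_w: "\<And>n. W (\<psi> n) = ennreal (w n)" and w0: "\<And>n. 0 \<le> w n"
    and w_le: "\<And>n. w n \<le> v n + 1 / real (Suc n)"
    and \<epsilon>: "0 < \<epsilon>"
  shows "\<exists>N. \<forall>n m. N \<le> n \<longrightarrow> n \<le> m \<longrightarrow> W (\<lambda>x. \<psi> n x - \<psi> m x) \<le> ennreal \<epsilon>"
proof -
  have l0: "0 \<le> l" using v0[of 0] v_le[of 0] by linarith
  define \<eta> where "\<eta> = \<epsilon> / (4 * (l + 1))"
  have \<eta>: "0 < \<eta>" unfolding \<eta>_def using \<epsilon> l0 by simp
  obtain C where C: "0 < C" and close: "\<And>K \<psi> \<psi>'. fin_supp \<psi> \<Longrightarrow> fin_supp \<psi>' \<Longrightarrow>
      (\<And>x. x \<in> K \<Longrightarrow> \<psi> x = 1 \<and> \<psi>' x = 1) \<Longrightarrow>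
      W (\<lambda>x. \<psi> x - \<psi>' x) + ennreal C * cap K \<le> ennreal (C / 2 + \<eta>) * (W \<psi> + W \<psi>')"
    using W_diff_plus_cap_le[OF \<eta>] by blast
  define \<delta> where "\<delta> = \<epsilon> / (4 * C)"
  have \<delta>: "0 < \<delta>" unfolding \<delta>_def using \<epsilon> C by simp
  have "\<forall>\<^sub>F n in sequentially. l - \<delta> < v n \<and> 1 / real (Suc n) < \<delta>"
  proof (rule eventually_conj)
    show "\<forall>\<^sub>F n in sequentially. l - \<delta> < v n" using v_lim \<delta> by (intro order_tendstoD(1)) auto
    have "(\<lambda>n. 1 / real (Suc n)) \<longlonglongrightarrow> 0"
      using LIMSEQ_inverse_real_of_nat by (simp add: inverse_eq_divide)
    then show "\<forall>\<^sub>F n in sequentially. 1 / real (Suc n) < \<delta>" using \<delta> by (intro order_tendstoD(2)) auto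
  qed
  then obtain N where N: "\<And>n. N \<le> n \<Longrightarrow> l - \<delta> < v n \<and> 1 / real (Suc n) < \<delta>"
    unfolding eventually_sequentially by blast
  have "W (\<lambda>x. \<psi> n x - \<psi> m x) \<le> ennreal \<epsilon>" if nm: "N \<le> n" "n \<le> m" for n m
  proof -
    have "F n \<subseteq> F m" using F nm(2) by (rule incseqD)
    then have "W (\<lambda>x. \<psi> n x - \<psi> m x) + ennreal C * cap (F n)
        \<le> ennreal (C / 2 + \<eta>) * (W (\<psi> n) + W (\<psi> m))"
      using one by (intro close fs) auto
    moreover have "ennreal C * cap (F n) = ennreal (C * v n)"
      unfolding cap_v using C v0 by (simp add: ennreal_mult)
    moreover have "ennreal (C / 2 + \<eta>) * (W (\<psi> n) + W (\<psi> m)) = ennreal ((C / 2 + \<eta>) * (w n + w m))"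
      unfolding W_w using C \<eta> w0 by (simp add: ennreal_mult ennreal_plus)
    ultimately have "W (\<lambda>x. \<psi> n x - \<psi> m x) \<le> ennreal ((C / 2 + \<eta>) * (w n + w m)) - ennreal (C * v n)"
      by (simp add: ennreal_le_minus_iff)
    also have "\<dots> = ennreal ((C / 2 + \<eta>) * (w n + w m) - C * v n)"
      using C v0 by (simp add: ennreal_minus)
    also have "\<dots> \<le> ennreal \<epsilon>"
    proof (rule ennreal_leI)
      have "1 / real (Suc m) \<le> 1 / real (Suc n)" using nm(2) by (simp add: frac_le)
      then have "w n + w m \<le> 2 * (l + 1 / real (Suc n))"
        using w_le[of n] w_le[of m] v_le[of n] v_le[of m] by simp
      then have "(C / 2 + \<eta>) * (w n + w m) - C * v n \<le> (C / 2 + \<eta>) * (2 * (l + 1 / real (Suc n))) - C * v n"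
        using C \<eta> by (simp add: mult_left_mono)
      also have "\<dots> = C * (l - v n + 1 / real (Suc n)) + 2 * \<eta> * (l + 1 / real (Suc n))"
        by (simp add: algebra_simps add_divide_distrib)
      also have "\<dots> \<le> C * (2 * \<delta>) + 2 * \<eta> * (l + 1)"
        using N[OF nm(1)] C \<eta> l0 by (intro add_mono mult_left_mono) auto
      also have "\<dots> = \<epsilon>" unfolding \<delta>_def \<eta>_def using C l0 by (simp add: field_simps)
      finally show "(C / 2 + \<eta>) * (w n + w m) - C * v n \<le> \<epsilon>" .
    qed
    finally show ?thesis .
  qed
  then show ?thesis by blast
qed

lemma bounded_cap_imp_parabolic:
  assumes cap_le: "\<And>K. finite K \<Longrightarrow> cap K \<le> M" and M: "M < \<infinity>"
  shows "p_parabolic b (\<lambda>_. 0) p"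
proof -
  obtain F :: "nat \<Rightarrow> 'x set" where F: "\<And>n. finite (F n)" "incseq F"
    and F_ev: "\<And>x. \<forall>\<^sub>F n in sequentially. x \<in> F n"
    using exhausting_finite_sets[OF countable_vertices] by auto
  define v where "v n = enn2real (cap (F n))" for n
  have cap_v: "cap (F n) = ennreal (v n)" for n
  proof -
    have "cap (F n) < \<infinity>" using cap_le[OF F(1)] M by (rule le_less_trans)
    then show ?thesis unfolding v_def by simp
  qed
  have v0: "0 \<le> v n" for n unfolding v_def by simp
  have "incseq v"
    unfolding incseq_def using cap_mono[OF incseqD[OF F(2)]] cap_v v0 by (simp add: ennreal_le_iff)
  moreover have "v n \<le> enn2real M" for n
    unfolding v_def using cap_le[OF F(1)] M by (intro enn2real_mono) (simp_all add: infinity_ennreal_def)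
  then have "bdd_above (range v)" by (intro bdd_aboveI[of _ "enn2real M"]) auto
  ultimately obtain l where v_lim: "v \<longlonglongrightarrow> l" and v_le: "\<And>n. v n \<le> l"
    using LIMSEQ_incseq_SUP incseq_le by blast
  have "\<exists>\<psi>. fin_supp \<psi> \<and> (\<forall>x\<in>F n. \<psi> x = 1) \<and> W \<psi> < ennreal (v n + 1 / real (Suc n))" for n
  proof -
    have "cap (F n) < ennreal (v n + 1 / real (Suc n))" unfolding cap_v using v0 by (simp add: ennreal_lessI)
    then obtain \<psi> where "fin_supp \<psi>" "\<And>x. 0 \<le> \<psi> x \<and> \<psi> x \<le> 1" "\<And>x. x \<in> F n \<Longrightarrow> \<psi> x = 1"
      "W \<psi> < ennreal (v n + 1 / real (Suc n))"
      using cap_less_imp_clipped by blast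
    then show ?thesis by blast
  qed
  then have "\<forall>n. \<exists>\<psi>. fin_supp \<psi> \<and> (\<forall>x\<in>F n. \<psi> x = 1) \<and> W \<psi> < ennreal (v n + 1 / real (Suc n))"
    by blast
  then obtain \<psi> where "\<forall>n. fin_supp (\<psi> n) \<and> (\<forall>x\<in>F n. \<psi> n x = 1)
      \<and> W (\<psi> n) < ennreal (v n + 1 / real (Suc n))"
    by (auto dest: choice)
  then have fs: "\<And>n. fin_supp (\<psi> n)" and one: "\<And>n x. x \<in> F n \<Longrightarrow> \<psi> n x = 1"
    and W_less: "\<And>n. W (\<psi> n) < ennreal (v n + 1 / real (Suc n))"
    by auto
  define w where "w n = enn2real (W (\<psi> n))" for n
  have W_w: "W (\<psi> n) = ennreal (w n)" for n
    unfolding w_def using W_fin_supp[OF fs] by (simp add: less_top[symmetric])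
  have w0: "0 \<le> w n" for n unfolding w_def by simp
  have w_le: "w n \<le> v n + 1 / real (Suc n)" for n
    using W_less[of n] w0[of n] unfolding W_w by (subst (asm) ennreal_less_iff) auto
  have lim: "(\<lambda>m. \<psi> m x) \<longlonglongrightarrow> 1" for x
    using F_ev[of x] by (rule tendsto_eventually[OF eventually_mono]) (rule one)
  have "(\<lambda>n. W (\<psi> n)) \<longlonglongrightarrow> 0"
    using lim near_minimizers_Cauchy[OF fs F(2) one cap_v v0 v_lim v_le W_w w0 w_le]
    by (rule W_tendsto_0_of_Cauchy)
  from fs this lim show ?thesis by (rule parabolicI)
qed

lemma bounded_seq_imp_parabolic:
  assumes "\<And>n. fin_supp (e n)" and "\<And>x. (\<lambda>n. e n x) \<longlonglongrightarrow> 1"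
    and "\<forall>\<^sub>F n in sequentially. W (e n) \<le> M" and "M < \<infinity>"
  shows "p_parabolic b (\<lambda>_. 0) p"
proof (rule bounded_cap_imp_parabolic)
  show "cap K \<le> ennreal (2 powr p) * M" if "finite K" for K
    using assms(1-3) that by (rule cap_le_of_tendsto_1)
  show "ennreal (2 powr p) * M < \<infinity>" using assms(4) by (simp add: ennreal_mult_less_top)
qed

section \<open>Approximation by finitely supported functions\<close>

lemma W_truncation_tendsto_0:
  assumes fin: "W f < \<infinity>"
  shows "(\<lambda>N::nat. W (\<lambda>x. f x - max (min (f x) (real N)) (- real N))) \<longlonglongrightarrow> 0"
proof -
  define t where "t N z = f z - max (min (f z) (real N)) (- real N)" for N :: nat and z
  define g where "g = (\<lambda>(x, y). ennreal (b x y * \<bar>f x - f y\<bar> powr p))"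
  have "(\<lambda>N. infsum (\<lambda>(x, y). ennreal (b x y * \<bar>t N x - t N y\<bar> powr p)) UNIV) \<longlonglongrightarrow> 0"
  proof (rule infsum_ennreal_dominated_tendsto_0)
    have "\<bar>t N x - t N y\<bar> \<le> \<bar>f x - f y\<bar>" for N x y unfolding t_def by (auto simp: max_def min_def)
    then show "(case z of (x, y) \<Rightarrow> ennreal (b x y * \<bar>t N x - t N y\<bar> powr p)) \<le> g z" for N z
      unfolding g_def case_prod_beta using p_gt_1 b_nonneg by (auto intro!: ennreal_leI mult_left_mono powr_mono2)
    show "infsum g UNIV < \<infinity>" using fin unfolding W_def g_def .
    show "(\<lambda>N. case z of (x, y) \<Rightarrow> ennreal (b x y * \<bar>t N x - t N y\<bar> powr p)) \<longlonglongrightarrow> 0" for z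
    proof (rule tendsto_eventually)
      obtain N0 :: nat where N0: "max \<bar>f (fst z)\<bar> \<bar>f (snd z)\<bar> \<le> real N0" using real_arch_simple by blast
      have t0: "t N w = 0" if "\<bar>f w\<bar> \<le> real N" for N w
        using that unfolding t_def abs_le_iff by (simp add: max_absorb1 min_absorb1)
      have "t N (fst z) = 0 \<and> t N (snd z) = 0" if "N0 \<le> N" for N
        using N0 that by (intro conjI t0) (auto simp: max_def split: if_splits)
      then show "\<forall>\<^sub>F N in sequentially. (case z of (x, y) \<Rightarrow> ennreal (b x y * \<bar>t N x - t N y\<bar> powr p)) = 0"
        unfolding eventually_sequentially case_prod_beta using p_gt_1 by (intro exI[of _ N0]) simp
    qed
  qed
  then show ?thesis unfolding W_def t_def .
qed

lemma weighted_W_tendsto_0: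
  assumes fin: "W f < \<infinity>" and u1: "\<And>n x. \<bar>u n x\<bar> \<le> 1" and u0: "\<And>x. (\<lambda>n. u n x) \<longlonglongrightarrow> 0"
  shows "(\<lambda>n. infsum (\<lambda>(x, y). ennreal (b x y * (\<bar>u n y\<bar> powr p * \<bar>f x - f y\<bar> powr p))) UNIV) \<longlonglongrightarrow> 0"
proof (rule infsum_ennreal_dominated_tendsto_0)
  show "(case z of (x, y) \<Rightarrow> ennreal (b x y * (\<bar>u n y\<bar> powr p * \<bar>f x - f y\<bar> powr p)))
      \<le> (case z of (x, y) \<Rightarrow> ennreal (b x y * \<bar>f x - f y\<bar> powr p))" for n z
  proof -
    have "\<bar>u n (snd z)\<bar> powr p \<le> 1" using u1[of n "snd z"] p_gt_1 by (simp add: powr_le1)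
    then show ?thesis unfolding case_prod_beta using b_nonneg
      by (intro ennreal_leI mult_left_mono) (auto intro: mult_left_le_one_le)
  qed
  show "infsum (\<lambda>(x, y). ennreal (b x y * \<bar>f x - f y\<bar> powr p)) UNIV < \<infinity>"
    using fin unfolding W_def .
  show "(\<lambda>n. case z of (x, y) \<Rightarrow> ennreal (b x y * (\<bar>u n y\<bar> powr p * \<bar>f x - f y\<bar> powr p))) \<longlonglongrightarrow> 0" for z
  proof -
    have "(\<lambda>n. b (fst z) (snd z) * (\<bar>u n (snd z)\<bar> powr p * \<bar>f (fst z) - f (snd z)\<bar> powr p))
        \<longlonglongrightarrow> b (fst z) (snd z) * (\<bar>0\<bar> powr p * \<bar>f (fst z) - f (snd z)\<bar> powr p)"
      using p_gt_1 by (intro tendsto_intros u0) auto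
    then have "(\<lambda>n. b (fst z) (snd z) * (\<bar>u n (snd z)\<bar> powr p * \<bar>f (fst z) - f (snd z)\<bar> powr p))
        \<longlonglongrightarrow> 0"
      by simp
    from tendsto_ennrealI[OF this] show ?thesis unfolding case_prod_beta by simp
  qed
qed

lemma W_mult_tendsto_0:
  assumes fin: "W f < \<infinity>" and f_le: "\<And>x. \<bar>f x\<bar> \<le> K"
    and u1: "\<And>n x. \<bar>u n x\<bar> \<le> 1" and u0: "\<And>x. (\<lambda>n. u n x) \<longlonglongrightarrow> 0"
    and Wu: "(\<lambda>n. W (u n)) \<longlonglongrightarrow> 0"
  shows "(\<lambda>n. W (\<lambda>x. f x * u n x)) \<longlonglongrightarrow> 0"
proof -
  define S where "S n = infsum (\<lambda>(x, y). ennreal (b x y * (\<bar>u n y\<bar> powr p * \<bar>f x - f y\<bar> powr p))) UNIV" for n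
  have "b x y * \<bar>f x * u n x - f y * u n y\<bar> powr p
      \<le> 2 powr p * K powr p * (b x y * \<bar>u n x - u n y\<bar> powr p)
        + 2 powr p * (b x y * (\<bar>u n y\<bar> powr p * \<bar>f x - f y\<bar> powr p))" for n x y
    using mult_left_mono[OF abs_mult_diff_powr_le[of p "f x" K "u n x" "f y" "u n y"] b_nonneg[of x y]]
      f_le p_gt_1 by (simp add: algebra_simps)
  then have bound: "W (\<lambda>x. f x * u n x) \<le> ennreal (2 powr p * K powr p) * W (u n) + ennreal (2 powr p) * S n"
    for n
    unfolding W_def S_def case_prod_beta using b_nonneg by (intro infsum_ennreal_le_lincomb) auto
  have "(\<lambda>n. ennreal (2 powr p * K powr p) * W (u n) + ennreal (2 powr p) * S n)
      \<longlonglongrightarrow> ennreal (2 powr p * K powr p) * 0 + ennreal (2 powr p) * 0"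
    unfolding S_def using weighted_W_tendsto_0[OF fin u1 u0] by (intro tendsto_add ennreal_tendsto_cmult Wu) auto
  then show ?thesis
    using tendsto_sandwich[of "\<lambda>_. 0" "\<lambda>n. W (\<lambda>x. f x * u n x)" sequentially
        "\<lambda>n. ennreal (2 powr p * K powr p) * W (u n) + ennreal (2 powr p) * S n" 0] bound
    by simp
qed

lemma parabolic_bounded_approx:
  assumes P: "p_parabolic b (\<lambda>_. 0) p" and W_g: "W g < \<infinity>" and g_le: "\<And>x. \<bar>g x\<bar> \<le> K"
  obtains \<phi> where "\<And>n. fin_supp (\<phi> n)" "(\<lambda>n. W (\<lambda>x. \<phi> n x - g x)) \<longlonglongrightarrow> 0"
    "\<And>x. (\<lambda>n. \<phi> n x) \<longlonglongrightarrow> g x"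
proof -
  obtain e where fs: "\<And>n. fin_supp (e n)" and e01: "\<And>n x. 0 \<le> e n x \<and> e n x \<le> 1"
    and e_ev: "\<And>x. \<forall>\<^sub>F n in sequentially. e n x = 1"
    and W_e: "\<And>n. W (e n) < ennreal (1 / real (Suc n))"
    using parabolic_exhaustion[OF P] by metis
  have e_lim: "(\<lambda>n. e n x) \<longlonglongrightarrow> 1" for x using e_ev by (rule tendsto_eventually)
  have "(\<lambda>n. W (\<lambda>x. g x * (1 - e n x))) \<longlonglongrightarrow> 0"
  proof (rule W_mult_tendsto_0[OF W_g g_le])
    show "\<bar>1 - e n x\<bar> \<le> 1" for n x using e01[of n x] by auto
    show "(\<lambda>n. 1 - e n x) \<longlonglongrightarrow> 0" for x using tendsto_diff[OF tendsto_const e_lim[of x], of 1] by simp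
    have "W (\<lambda>x. 1 - e n x) = W (e n)" for n by (rule W_cong_grad) (simp add: abs_minus_commute)
    moreover have "(\<lambda>n. W (e n)) \<longlonglongrightarrow> 0"
      using less_imp_le[OF W_e] by (rule ennreal_tendsto_0_if_le_inverse_Suc)
    ultimately show "(\<lambda>n. W (\<lambda>x. 1 - e n x)) \<longlonglongrightarrow> 0" by simp
  qed
  moreover have "W (\<lambda>x. g x * e n x - g x) = W (\<lambda>x. g x * (1 - e n x))" for n
    by (rule W_cong_grad) (simp add: algebra_simps abs_minus_commute)
  moreover have "fin_supp (\<lambda>x. g x * e n x)" for n
    using fs[of n] unfolding fin_supp_def by (rule finite_subset[rotated]) auto
  moreover have "(\<lambda>n. g x * e n x) \<longlonglongrightarrow> g x" for x
    using tendsto_mult[OF tendsto_const e_lim[of x], of "g x"] by simp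
  ultimately show ?thesis using that[of "\<lambda>n x. g x * e n x"] by simp
qed

lemma parabolic_approx:
  assumes P: "p_parabolic b (\<lambda>_. 0) p" and fin: "W f < \<infinity>" and \<epsilon>: "0 < \<epsilon>"
  obtains \<phi> where "fin_supp \<phi>" "W (\<lambda>x. \<phi> x - f x) \<le> ennreal \<epsilon>" "\<bar>\<phi> x0 - f x0\<bar> \<le> \<epsilon>"
proof -
  define \<epsilon>' where "\<epsilon>' = \<epsilon> / (2 * 2 powr p)"
  have \<epsilon>': "0 < \<epsilon>'" unfolding \<epsilon>'_def using \<epsilon> by simp
  \<comment> \<open>first truncate f at a level N, then approximate the bounded truncation\<close>
  have "\<forall>\<^sub>F N in sequentially. W (\<lambda>x. f x - max (min (f x) (real N)) (- real N)) < ennreal \<epsilon>' \<and> \<bar>f x0\<bar> \<le> real N"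
  proof (rule eventually_conj)
    show "\<forall>\<^sub>F N in sequentially. W (\<lambda>x. f x - max (min (f x) (real N)) (- real N)) < ennreal \<epsilon>'"
      using W_truncation_tendsto_0[OF fin] \<epsilon>' by (intro order_tendstoD(2)) auto
    obtain N0 :: nat where "\<bar>f x0\<bar> \<le> real N0" using real_arch_simple by blast
    then show "\<forall>\<^sub>F N in sequentially. \<bar>f x0\<bar> \<le> real N"
      unfolding eventually_sequentially by (intro exI[of _ N0]) (auto intro: order_trans)
  qed
  then obtain N :: nat where N: "W (\<lambda>x. f x - max (min (f x) (real N)) (- real N)) < ennreal \<epsilon>'" "\<bar>f x0\<bar> \<le> real N"
    unfolding eventually_sequentially by blast
  define g where "g x = max (min (f x) (real N)) (- real N)" for x
  have g_le: "\<bar>g x\<bar> \<le> real N" for x unfolding g_def by auto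
  have g_x0: "g x0 = f x0" unfolding g_def using N(2) by (auto simp: abs_le_iff)
  have W_g: "W g < \<infinity>"
    using W_mono_grad[of g f] fin unfolding g_def by (force simp: max_def min_def)
  obtain \<phi> where fs: "\<And>n. fin_supp (\<phi> n)" and W0: "(\<lambda>n. W (\<lambda>x. \<phi> n x - g x)) \<longlonglongrightarrow> 0"
    and lim: "\<And>x. (\<lambda>n. \<phi> n x) \<longlonglongrightarrow> g x"
    using parabolic_bounded_approx[OF P W_g g_le] by blast
  have "\<forall>\<^sub>F n in sequentially. W (\<lambda>x. \<phi> n x - g x) < ennreal \<epsilon>' \<and> \<bar>\<phi> n x0 - g x0\<bar> < \<epsilon>"
    using \<epsilon>' \<epsilon> W0 lim[of x0] by (intro eventually_conj order_tendstoD(2)) (auto simp: tendsto_iff dist_real_def)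
  then obtain n where n: "W (\<lambda>x. \<phi> n x - g x) < ennreal \<epsilon>'" "\<bar>\<phi> n x0 - g x0\<bar> < \<epsilon>"
    unfolding eventually_sequentially by blast
  show ?thesis
  proof
    show "fin_supp (\<phi> n)" by (rule fs)
    show "\<bar>\<phi> n x0 - f x0\<bar> \<le> \<epsilon>" using n(2) g_x0 by simp
    have "W (\<lambda>x. \<phi> n x - f x) \<le> ennreal (2 powr p) * W (\<lambda>x. \<phi> n x - g x) + ennreal (2 powr p) * W (\<lambda>x. g x - f x)"
      using W_add[of "\<lambda>x. \<phi> n x - g x" "\<lambda>x. g x - f x"] by simp
    also have "W (\<lambda>x. g x - f x) = W (\<lambda>x. f x - max (min (f x) (real N)) (- real N))"
      unfolding g_def by (rule W_cong_grad) (simp add: abs_minus_commute algebra_simps)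
    also have "ennreal (2 powr p) * W (\<lambda>x. \<phi> n x - g x)
        + ennreal (2 powr p) * W (\<lambda>x. f x - max (min (f x) (real N)) (- real N))
        \<le> ennreal (2 powr p) * ennreal \<epsilon>' + ennreal (2 powr p) * ennreal \<epsilon>'"
      using N(1) n(1) by (intro add_mono mult_left_mono) auto
    also have "\<dots> = ennreal \<epsilon>"
      unfolding \<epsilon>'_def using \<epsilon> by (simp add: ennreal_mult'[symmetric] ennreal_plus[symmetric] del: ennreal_plus)
    finally show "W (\<lambda>x. \<phi> n x - f x) \<le> ennreal \<epsilon>" .
  qed
qed

lemma parabolic_imp_mem_D0:
  assumes P: "p_parabolic b (\<lambda>_. 0) p" and fin: "W f < \<infinity>"
  shows "f \<in> D0p b (\<lambda>_. 0) p x0"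
proof -
  have "\<exists>\<phi>. fin_supp \<phi> \<and> W (\<lambda>x. \<phi> x - f x) \<le> ennreal (1 / real (Suc k))
      \<and> \<bar>\<phi> x0 - f x0\<bar> \<le> 1 / real (Suc k)" for k
  proof -
    have "0 < 1 / real (Suc k)" by simp
    then obtain \<phi> where "fin_supp \<phi>"
      "W (\<lambda>x. \<phi> x - f x) \<le> ennreal (1 / real (Suc k))" "\<bar>\<phi> x0 - f x0\<bar> \<le> 1 / real (Suc k)"
      by (rule parabolic_approx[OF P fin])
    then show ?thesis by blast
  qed
  then have "\<forall>k. \<exists>\<phi>. fin_supp \<phi> \<and> W (\<lambda>x. \<phi> x - f x) \<le> ennreal (1 / real (Suc k))
      \<and> \<bar>\<phi> x0 - f x0\<bar> \<le> 1 / real (Suc k)"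
    by blast
  then obtain \<phi> where "\<forall>k. fin_supp (\<phi> k) \<and> W (\<lambda>x. \<phi> k x - f x) \<le> ennreal (1 / real (Suc k))
      \<and> \<bar>\<phi> k x0 - f x0\<bar> \<le> 1 / real (Suc k)"
    by (auto dest: choice)
  then have fs: "\<And>k. fin_supp (\<phi> k)"
    and W_le: "\<And>k. W (\<lambda>x. \<phi> k x - f x) \<le> ennreal (1 / real (Suc k))"
    and x0_le: "\<And>k. \<bar>\<phi> k x0 - f x0\<bar> \<le> 1 / real (Suc k)"
    by auto
  have lim: "(\<lambda>k. 1 / real (Suc k)) \<longlonglongrightarrow> 0"
    using LIMSEQ_inverse_real_of_nat by (simp add: inverse_eq_divide)
  have "(\<lambda>k. W (\<lambda>x. \<phi> k x - f x)) \<longlonglongrightarrow> 0"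
    using W_le by (rule ennreal_tendsto_0_if_le_inverse_Suc)
  moreover have "(\<lambda>k. \<phi> k x0 - f x0) \<longlonglongrightarrow> 0"
    using _ lim by (rule Lim_null_comparison) (use x0_le in simp)
  moreover have "W (\<lambda>x. \<phi> k x - f x) < \<infinity>" for k using W_le[of k] by (simp add: le_less_trans)
  ultimately have "(\<lambda>k. normo b (\<lambda>_. 0) p x0 (\<lambda>x. \<phi> k x - f x)) \<longlonglongrightarrow> 0"
    using normo_tendsto_0_iff[of "\<lambda>k x. \<phi> k x - f x" x0] by simp
  then show ?thesis unfolding D0p_def mem_Collect_eq mem_Dp_iff using fs fin by blast
qed

lemma mem_D0E:
  assumes "u \<in> D0p b (\<lambda>_. 0) p x0"
  obtains \<phi> where "\<And>n. fin_supp (\<phi> n)" "(\<lambda>n. W (\<lambda>x. \<phi> n x - u x)) \<longlonglongrightarrow> 0"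
    "\<And>x. (\<lambda>n. \<phi> n x) \<longlonglongrightarrow> u x" "W u < \<infinity>"
proof -
  obtain \<phi> where fs: "\<And>n. fin_supp (\<phi> n)"
    and lim: "(\<lambda>n. normo b (\<lambda>_. 0) p x0 (\<lambda>x. \<phi> n x - u x)) \<longlonglongrightarrow> 0"
    and Wu: "W u < \<infinity>"
    using assms unfolding D0p_def mem_Collect_eq mem_Dp_iff by blast
  have "W (\<lambda>x. \<phi> n x - u x) < \<infinity>" for n
  proof -
    have "ennreal (2 powr p) * W (\<phi> n) + ennreal (2 powr p) * W u < \<infinity>"
      using W_fin_supp[OF fs[of n]] Wu by (simp add: ennreal_mult_less_top)
    with W_diff show ?thesis by (rule le_less_trans)
  qed
  then have "(\<lambda>n. W (\<lambda>x. \<phi> n x - u x)) \<longlonglongrightarrow> 0 \<and> (\<lambda>n. \<phi> n x0 - u x0) \<longlonglongrightarrow> 0"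
    using lim normo_tendsto_0_iff[of "\<lambda>n x. \<phi> n x - u x" x0] by simp
  then have W0: "(\<lambda>n. W (\<lambda>x. \<phi> n x - u x)) \<longlonglongrightarrow> 0" and x0: "(\<lambda>n. \<phi> n x0 - u x0) \<longlonglongrightarrow> 0"
    by auto
  have lim_u: "(\<lambda>n. \<phi> n x) \<longlonglongrightarrow> u x" for x
  proof -
    have "(\<lambda>n. \<phi> n x - u x) \<longlonglongrightarrow> 0" using W0 x0 by (rule W_tendsto_0_imp_tendsto)
    from tendsto_add[OF this tendsto_const[of "u x"]] show ?thesis by simp
  qed
  from fs W0 lim_u Wu show ?thesis by (rule that)
qed

lemma one_mem_D0_imp_parabolic:
  assumes "(\<lambda>_. 1) \<in> D0p b (\<lambda>_. 0) p x0"
  shows "p_parabolic b (\<lambda>_. 0) p"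
proof -
  obtain \<phi> where fs: "\<And>n. fin_supp (\<phi> n)" and W0: "(\<lambda>n. W (\<lambda>x. \<phi> n x - 1)) \<longlonglongrightarrow> 0"
    and lim: "\<And>x. (\<lambda>n. \<phi> n x) \<longlonglongrightarrow> 1" and "W (\<lambda>_. 1) < \<infinity>"
    using mem_D0E[OF assms] by blast
  have "W (\<lambda>x. \<phi> n x - 1) = W (\<phi> n)" for n by (rule W_cong_grad) simp
  with W0 have "(\<lambda>n. W (\<phi> n)) \<longlonglongrightarrow> 0" by simp
  from fs this lim show ?thesis by (rule parabolicI)
qed

lemma D0_pos_off_finite_imp_parabolic:
  assumes u: "u \<in> D0p b (\<lambda>_. 0) p x0" and K: "finite K"
    and pos: "(INF x\<in>UNIV - K. ereal (u x)) > 0"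
  shows "p_parabolic b (\<lambda>_. 0) p"
proof -
  obtain \<delta> where "0 < ereal \<delta>" and \<delta>: "ereal \<delta> < (INF x\<in>UNIV - K. ereal (u x))"
    using ereal_dense2[OF pos] by blast
  then have \<delta>0: "0 < \<delta>" by simp
  have u_ge: "\<delta> \<le> u x" if "x \<notin> K" for x
  proof -
    have "(INF x\<in>UNIV - K. ereal (u x)) \<le> ereal (u x)" using that by (intro INF_lower) auto
    with \<delta> have "ereal \<delta> < ereal (u x)" by (rule order_less_le_trans)
    then show ?thesis by simp
  qed
  obtain \<phi> where fs: "\<And>n. fin_supp (\<phi> n)" and W0: "(\<lambda>n. W (\<lambda>x. \<phi> n x - u x)) \<longlonglongrightarrow> 0"
    and \<phi>_lim: "\<And>x. (\<lambda>n. \<phi> n x) \<longlonglongrightarrow> u x" and Wu: "W u < \<infinity>"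
    using mem_D0E[OF u] by blast
  \<comment> \<open>\<open>\<phi> n / \<delta>\<close> clipped to [0, 1] tends to 1 off K; taking the max with the indicator of K fixes K\<close>
  define g where "g n x = max (min (max (\<phi> n x / \<delta>) 0) 1) (of_bool (x \<in> K))" for n x
  have g_fs: "fin_supp (g n)" for n
    using fs[of n] K unfolding fin_supp_def g_def
    by (rule finite_subset[rotated, OF finite_UnI]) (auto simp: max_def min_def)
  have g_lim: "(\<lambda>n. g n x) \<longlonglongrightarrow> 1" for x
  proof (cases "x \<in> K")
    case False
    have "(\<lambda>n. g n x) \<longlonglongrightarrow> max (min (max (u x / \<delta>) 0) 1) (of_bool (x \<in> K))"
      unfolding g_def by (intro tendsto_intros \<phi>_lim) (use \<delta>0 in auto)
    moreover have "max (min (max (u x / \<delta>) 0) 1) (of_bool (x \<in> K)) = (1::real)"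
      using u_ge[OF False] \<delta>0 False by (simp add: le_divide_eq)
    ultimately show ?thesis by simp
  qed (simp add: g_def)
  define M where "M = ennreal ((1 / \<delta>) powr p) * (ennreal (2 powr p) * (1 + W u)) + W (\<lambda>x. of_bool (x \<in> K))"
  have "M < \<infinity>"
    using Wu W_fin_supp[of "\<lambda>x. of_bool (x \<in> K)"] K
    by (simp add: M_def fin_supp_def ennreal_mult_less_top)
  moreover have "\<forall>\<^sub>F n in sequentially. W (\<lambda>x. \<phi> n x - u x) < 1"
    using W0 by (rule order_tendstoD(2)) simp
  then have "\<forall>\<^sub>F n in sequentially. W (g n) \<le> M"
  proof eventually_elim
    case (elim n)
    have "W (g n) \<le> W (\<lambda>x. min (max (\<phi> n x / \<delta>) 0) 1) + W (\<lambda>x. of_bool (x \<in> K))"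
      unfolding g_def by (rule W_max)
    also have "W (\<lambda>x. min (max (\<phi> n x / \<delta>) 0) 1) \<le> W (\<lambda>x. (1 / \<delta>) * \<phi> n x)"
      by (rule W_mono_grad) (auto simp: max_def min_def abs_le_iff)
    also have "\<dots> = ennreal ((1 / \<delta>) powr p) * W (\<phi> n)" using \<delta>0 W_scale[of "1 / \<delta>" "\<phi> n"] by simp
    also have "W (\<phi> n) \<le> ennreal (2 powr p) * W (\<lambda>x. \<phi> n x - u x) + ennreal (2 powr p) * W u"
      using W_add[of "\<lambda>x. \<phi> n x - u x" u] by simp
    also have "\<dots> \<le> ennreal (2 powr p) * (1 + W u)"
      using elim by (simp add: distrib_left[symmetric] add_right_mono mult_left_mono)
    finally show ?case unfolding M_def by (simp add: add_right_mono mult_left_mono)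
  qed
  ultimately show ?thesis using g_fs g_lim by (intro bounded_seq_imp_parabolic) auto
qed

lemma not_equiv_if_parabolic:
  assumes P: "p_parabolic b (\<lambda>_. 0) p"
  shows "\<not> equiv_functionals b (\<lambda>_. 0) p y0"
proof
  assume "equiv_functionals b (\<lambda>_. 0) p y0"
  then obtain C where C: "0 < C"
    and le: "\<And>\<phi>. fin_supp \<phi> \<Longrightarrow> normo b (\<lambda>_. 0) p y0 \<phi> \<le> C * enn2real (E \<phi>) powr (1 / p)"
    unfolding equiv_functionals_def by blast
  define \<epsilon> where "\<epsilon> = (1 / (2 * C)) powr p"
  have \<epsilon>: "0 < \<epsilon>" unfolding \<epsilon>_def using C by simp
  have "cap {y0} = 0" using P unfolding p_parabolic_iff_cap by simp
  then obtain \<phi> where \<phi>: "fin_supp \<phi>" "1 \<le> \<phi> y0" "W \<phi> < ennreal \<epsilon>"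
    using \<epsilon> unfolding cap_eq_0_iff by force
  define t where "t = enn2real (E \<phi>)"
  have E_less: "E \<phi> < ennreal \<epsilon>" using energy_le_W \<phi>(3) by (rule le_less_trans)
  then have "E \<phi> < \<infinity>" by (rule order_less_trans) simp
  then have t: "0 \<le> t" "t < \<epsilon>" using E_less unfolding t_def by simp_all
  have "1 \<le> (\<bar>\<phi> y0\<bar> powr p) powr (1 / p)" using \<phi>(2) p_gt_1 by (simp add: powr_powr)
  also have "\<dots> \<le> normo b (\<lambda>_. 0) p y0 \<phi>"
    unfolding normo_def t_def[symmetric] using p_gt_1 t by (intro powr_mono2) auto
  also have "\<dots> \<le> C * t powr (1 / p)" using le[OF \<phi>(1)] unfolding t_def .
  also have "\<dots> \<le> C * \<epsilon> powr (1 / p)" using t p_gt_1 C by (intro mult_left_mono powr_mono2) auto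
  also have "\<epsilon> powr (1 / p) = 1 / (2 * C)" unfolding \<epsilon>_def using p_gt_1 C by (simp add: powr_powr)
  finally show False using C by simp
qed

lemma point_bound_if_not_parabolic:
  assumes nP: "\<not> p_parabolic b (\<lambda>_. 0) p"
  shows "\<exists>C>0. \<forall>\<phi>. fin_supp \<phi> \<longrightarrow> \<bar>\<phi> y0\<bar> powr p \<le> C * enn2real (W \<phi>)"
proof (rule ccontr)
  assume "\<not> ?thesis"
  then have "\<exists>\<phi>. fin_supp \<phi> \<and> real (Suc n) * enn2real (W \<phi>) < \<bar>\<phi> y0\<bar> powr p" for n
    using of_nat_0_less_iff[of "Suc n"] by (auto simp: not_le simp del: of_nat_0_less_iff)
  then have "\<forall>n. \<exists>\<phi>. fin_supp \<phi> \<and> real (Suc n) * enn2real (W \<phi>) < \<bar>\<phi> y0\<bar> powr p" by blast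
  then obtain \<phi> where "\<forall>n. fin_supp (\<phi> n) \<and> real (Suc n) * enn2real (W (\<phi> n)) < \<bar>\<phi> n y0\<bar> powr p"
    by (auto dest: choice)
  then have fs: "\<And>n. fin_supp (\<phi> n)"
    and big: "\<And>n. real (Suc n) * enn2real (W (\<phi> n)) < \<bar>\<phi> n y0\<bar> powr p" by auto
  \<comment> \<open>normalize at y0: the energies of the normalized functions tend to 0\<close>
  define \<psi> where "\<psi> n x = \<phi> n x / \<phi> n y0" for n x
  have nz: "\<phi> n y0 \<noteq> 0" for n
  proof
    assume "\<phi> n y0 = 0"
    then have "real (Suc n) * enn2real (W (\<phi> n)) < 0" using big[of n] by simp
    moreover have "0 \<le> real (Suc n) * enn2real (W (\<phi> n))" by simp
    ultimately show False by linarith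
  qed
  have fs_\<psi>: "fin_supp (\<psi> n)" for n
    using fs[of n] unfolding fin_supp_def \<psi>_def by (rule finite_subset[rotated]) auto
  have \<psi>_y0: "\<psi> n y0 = 1" for n unfolding \<psi>_def using nz by simp
  have W_\<psi>: "W (\<psi> n) \<le> ennreal (1 / real (Suc n))" for n
  proof -
    define w where "w = enn2real (W (\<phi> n))"
    have w: "W (\<phi> n) = ennreal w" "0 \<le> w"
      unfolding w_def using W_fin_supp[OF fs[of n]] by (auto simp: less_top[symmetric])
    have a: "0 < \<bar>\<phi> n y0\<bar> powr p" using nz by simp
    have "W (\<psi> n) = ennreal ((1 / \<bar>\<phi> n y0\<bar>) powr p) * ennreal w"
      using W_scale[of "1 / \<phi> n y0" "\<phi> n"] unfolding \<psi>_def w(1) by (simp add: abs_divide)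
    also have "\<dots> = ennreal (w / \<bar>\<phi> n y0\<bar> powr p)"
      using w(2) by (simp add: ennreal_mult'[symmetric] powr_divide)
    also have "\<dots> \<le> ennreal (1 / real (Suc n))"
      using big[of n] a unfolding w_def[symmetric] by (intro ennreal_leI) (simp add: field_simps)
    finally show ?thesis .
  qed
  have "(\<lambda>n. W (\<psi> n)) \<longlonglongrightarrow> 0" using W_\<psi> by (rule ennreal_tendsto_0_if_le_inverse_Suc)
  from fs_\<psi> this have "p_parabolic b (\<lambda>_. 0) p" by (rule parabolicI[where y = y0]) (simp add: \<psi>_y0)
  with nP show False by simp
qed

lemma equiv_if_not_parabolic:
  assumes "\<not> p_parabolic b (\<lambda>_. 0) p"
  shows "equiv_functionals b (\<lambda>_. 0) p y0"
proof -
  obtain C where C: "0 < C" and bound: "\<And>\<phi>. fin_supp \<phi> \<Longrightarrow> \<bar>\<phi> y0\<bar> powr p \<le> C * enn2real (W \<phi>)"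
    using point_bound_if_not_parabolic[OF assms] by blast
  have "1 * enn2real (E \<phi>) powr (1 / p) \<le> normo b (\<lambda>_. 0) p y0 \<phi> \<and>
      normo b (\<lambda>_. 0) p y0 \<phi> \<le> (1 + 2 * C) powr (1 / p) * enn2real (E \<phi>) powr (1 / p)"
    if fs: "fin_supp \<phi>" for \<phi>
  proof
    define t where "t = enn2real (E \<phi>)"
    have t: "0 \<le> t" and W_t: "enn2real (W \<phi>) = 2 * t"
      unfolding t_def W_eq_energy by (simp_all add: enn2real_mult)
    show "1 * enn2real (E \<phi>) powr (1 / p) \<le> normo b (\<lambda>_. 0) p y0 \<phi>"
      unfolding normo_def t_def[symmetric] using p_gt_1 t by (simp add: powr_mono2)
    have "normo b (\<lambda>_. 0) p y0 \<phi> \<le> (t + C * (2 * t)) powr (1 / p)"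
      unfolding normo_def t_def[symmetric] using p_gt_1 t bound[OF fs] W_t by (intro powr_mono2) auto
    also have "\<dots> = (1 + 2 * C) powr (1 / p) * t powr (1 / p)"
      using C t by (simp add: powr_mult[symmetric] algebra_simps)
    finally show "normo b (\<lambda>_. 0) p y0 \<phi> \<le> (1 + 2 * C) powr (1 / p) * enn2real (E \<phi>) powr (1 / p)"
      by (simp add: t_def)
  qed
  moreover have "0 < (1 + 2 * C) powr (1 / p)" using C by simp
  ultimately show ?thesis unfolding equiv_functionals_def using zero_less_one by blast
qed

section \<open>The equivalent characterizations\<close>

lemma parabolic_iff_Dp_eq_D0: "p_parabolic b (\<lambda>_. 0) p \<longleftrightarrow> Dp b (\<lambda>_. 0) p = D0p b (\<lambda>_. 0) p x0"
proof
  assume "p_parabolic b (\<lambda>_. 0) p"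
  then show "Dp b (\<lambda>_. 0) p = D0p b (\<lambda>_. 0) p x0"
    using parabolic_imp_mem_D0 unfolding D0p_def by (auto simp: mem_Dp_iff)
next
  assume "Dp b (\<lambda>_. 0) p = D0p b (\<lambda>_. 0) p x0"
  moreover have "(\<lambda>_. 1) \<in> Dp b (\<lambda>_. 0) p" by (simp add: mem_Dp_iff W_const)
  ultimately show "p_parabolic b (\<lambda>_. 0) p" by (intro one_mem_D0_imp_parabolic) simp
qed

lemma parabolic_iff_one_mem_D0: "p_parabolic b (\<lambda>_. 0) p \<longleftrightarrow> (\<lambda>_. 1) \<in> D0p b (\<lambda>_. 0) p x0"
  using parabolic_imp_mem_D0[of "\<lambda>_. 1"] one_mem_D0_imp_parabolic by (auto simp: W_const)

lemma parabolic_iff_Dp_lp_eq_D0_lp: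
  "p_parabolic b (\<lambda>_. 0) p \<longleftrightarrow>
     (\<forall>\<mu>::'x \<Rightarrow> real. (\<forall>x. 0 < \<mu> x) \<longrightarrow> Dp b (\<lambda>_. 0) p \<inter> lp p \<mu> = D0p b (\<lambda>_. 0) p x0 \<inter> lp p \<mu>)"
proof
  assume "p_parabolic b (\<lambda>_. 0) p"
  then show "\<forall>\<mu>::'x \<Rightarrow> real. (\<forall>x. 0 < \<mu> x) \<longrightarrow> Dp b (\<lambda>_. 0) p \<inter> lp p \<mu> = D0p b (\<lambda>_. 0) p x0 \<inter> lp p \<mu>"
    using parabolic_iff_Dp_eq_D0[of x0] by simp
next
  assume lp_eq: "\<forall>\<mu>::'x \<Rightarrow> real. (\<forall>x. 0 < \<mu> x) \<longrightarrow> Dp b (\<lambda>_. 0) p \<inter> lp p \<mu> = D0p b (\<lambda>_. 0) p x0 \<inter> lp p \<mu>"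
  obtain \<mu> :: "'x \<Rightarrow> real" where \<mu>: "\<forall>x. 0 < \<mu> x" "\<mu> summable_on UNIV"
    using exists_pos_summable_weight[OF countable_vertices] by blast
  have "(\<lambda>_. 1) \<in> Dp b (\<lambda>_. 0) p \<inter> lp p \<mu>" using \<mu>(2) by (simp add: mem_Dp_iff W_const lp_def)
  then have "(\<lambda>_. 1) \<in> D0p b (\<lambda>_. 0) p x0" using lp_eq \<mu>(1) by blast
  then show "p_parabolic b (\<lambda>_. 0) p" by (rule one_mem_D0_imp_parabolic)
qed

lemma parabolic_iff_exhaustion:
  "p_parabolic b (\<lambda>_. 0) p \<longleftrightarrow>
     (\<exists>e :: nat \<Rightarrow> 'x \<Rightarrow> real. (\<forall>n. fin_supp (e n)) \<and> (\<forall>n x. 0 \<le> e n x)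
        \<and> (\<forall>n x. e n x \<le> e (Suc n) x) \<and> (\<forall>x. (\<lambda>n. e n x) \<longlonglongrightarrow> 1)
        \<and> (\<lambda>n. energy b (\<lambda>_. 0) p (e n)) \<longlonglongrightarrow> 0)"
proof
  assume P: "p_parabolic b (\<lambda>_. 0) p"
  obtain e where fs: "\<And>n. fin_supp (e n)" and e01: "\<And>n x. 0 \<le> e n x \<and> e n x \<le> 1"
    and mono: "\<And>n x. e n x \<le> e (Suc n) x" and e_ev: "\<And>x. \<forall>\<^sub>F n in sequentially. e n x = 1"
    and W_e: "\<And>n. W (e n) < ennreal (1 / real (Suc n))"
    using parabolic_exhaustion[OF P] by metis
  have "E (e n) \<le> ennreal (1 / real (Suc n))" for n
    using energy_le_W[of "e n"] less_imp_le[OF W_e[of n]] by (rule order_trans)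
  then have "(\<lambda>n. E (e n)) \<longlonglongrightarrow> 0" by (rule ennreal_tendsto_0_if_le_inverse_Suc)
  moreover have "(\<lambda>n. e n x) \<longlonglongrightarrow> 1" for x using e_ev by (rule tendsto_eventually)
  ultimately show "\<exists>e :: nat \<Rightarrow> 'x \<Rightarrow> real. (\<forall>n. fin_supp (e n)) \<and> (\<forall>n x. 0 \<le> e n x)
        \<and> (\<forall>n x. e n x \<le> e (Suc n) x) \<and> (\<forall>x. (\<lambda>n. e n x) \<longlonglongrightarrow> 1)
        \<and> (\<lambda>n. energy b (\<lambda>_. 0) p (e n)) \<longlonglongrightarrow> 0"
    using fs e01 mono by blast
next
  assume "\<exists>e :: nat \<Rightarrow> 'x \<Rightarrow> real. (\<forall>n. fin_supp (e n)) \<and> (\<forall>n x. 0 \<le> e n x)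
        \<and> (\<forall>n x. e n x \<le> e (Suc n) x) \<and> (\<forall>x. (\<lambda>n. e n x) \<longlonglongrightarrow> 1)
        \<and> (\<lambda>n. energy b (\<lambda>_. 0) p (e n)) \<longlonglongrightarrow> 0"
  then obtain e :: "nat \<Rightarrow> 'x \<Rightarrow> real" where fs: "\<And>n. fin_supp (e n)"
    and lim: "\<And>x. (\<lambda>n. e n x) \<longlonglongrightarrow> 1" and E0: "(\<lambda>n. E (e n)) \<longlonglongrightarrow> 0"
    by blast
  have "(\<lambda>n. W (e n)) \<longlonglongrightarrow> 0"
    using ennreal_tendsto_cmult[OF _ E0, of 2] by (simp add: W_eq_energy)
  with fs show "p_parabolic b (\<lambda>_. 0) p" using lim by (rule parabolicI)
qed

lemma parabolic_iff_bounded_approx: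
  "p_parabolic b (\<lambda>_. 0) p \<longleftrightarrow>
     (\<exists>e :: nat \<Rightarrow> 'x \<Rightarrow> real. (\<forall>n. fin_supp (e n)) \<and> (\<forall>x. (\<lambda>n. e n x) \<longlonglongrightarrow> 1)
        \<and> (SUP n. energy b (\<lambda>_. 0) p (e n)) < \<infinity>)"
proof
  assume P: "p_parabolic b (\<lambda>_. 0) p"
  obtain e where fs: "\<And>n. fin_supp (e n)" and e_ev: "\<And>x. \<forall>\<^sub>F n in sequentially. e n x = 1"
    and W_e: "\<And>n. W (e n) < ennreal (1 / real (Suc n))"
    using parabolic_exhaustion[OF P] by metis
  have "E (e n) \<le> 1" for n
  proof -
    have "E (e n) \<le> ennreal (1 / real (Suc n))"
      using energy_le_W[of "e n"] less_imp_le[OF W_e[of n]] by (rule order_trans)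
    also have "\<dots> \<le> 1" by simp
    finally show ?thesis .
  qed
  then have "(SUP n. E (e n)) \<le> 1" by (rule SUP_least)
  then have "(SUP n. E (e n)) < \<infinity>" by (simp add: le_less_trans)
  moreover have "(\<lambda>n. e n x) \<longlonglongrightarrow> 1" for x using e_ev by (rule tendsto_eventually)
  ultimately show "\<exists>e :: nat \<Rightarrow> 'x \<Rightarrow> real. (\<forall>n. fin_supp (e n)) \<and> (\<forall>x. (\<lambda>n. e n x) \<longlonglongrightarrow> 1)
        \<and> (SUP n. energy b (\<lambda>_. 0) p (e n)) < \<infinity>"
    using fs by blast
next
  assume "\<exists>e :: nat \<Rightarrow> 'x \<Rightarrow> real. (\<forall>n. fin_supp (e n)) \<and> (\<forall>x. (\<lambda>n. e n x) \<longlonglongrightarrow> 1)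
        \<and> (SUP n. energy b (\<lambda>_. 0) p (e n)) < \<infinity>"
  then obtain e :: "nat \<Rightarrow> 'x \<Rightarrow> real" where fs: "\<And>n. fin_supp (e n)"
    and lim: "\<And>x. (\<lambda>n. e n x) \<longlonglongrightarrow> 1" and sup: "(SUP n. E (e n)) < \<infinity>"
    by blast
  have "W (e n) \<le> 2 * (SUP n. E (e n))" for n
    unfolding W_eq_energy by (intro mult_left_mono SUP_upper) auto
  moreover have "2 * (SUP n. E (e n)) < \<infinity>" using sup by (simp add: ennreal_mult_less_top)
  ultimately show "p_parabolic b (\<lambda>_. 0) p"
    using fs lim by (intro bounded_seq_imp_parabolic[of e]) auto
qed

lemma parabolic_iff_D0_pos_off_finite:
  "p_parabolic b (\<lambda>_. 0) p \<longleftrightarrow>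
     (\<exists>u\<in>D0p b (\<lambda>_. 0) p x0. \<exists>K. finite K \<and> (INF x\<in>UNIV - K. ereal (u x)) > 0)"
proof
  assume "p_parabolic b (\<lambda>_. 0) p"
  then have one: "(\<lambda>_. 1) \<in> D0p b (\<lambda>_. 0) p x0" using parabolic_iff_one_mem_D0[of x0] by simp
  show "\<exists>u\<in>D0p b (\<lambda>_. 0) p x0. \<exists>K. finite K \<and> (INF x\<in>UNIV - K. ereal (u x)) > 0"
  proof (intro bexI exI conjI)
    show "(INF x\<in>UNIV - {}. ereal 1) > 0" by simp
  qed (use one in simp_all)
qed (elim bexE exE conjE, rule D0_pos_off_finite_imp_parabolic)

end

theorem proposition3p3:
  fixes b :: "'x \<Rightarrow> 'x \<Rightarrow> real" and m c :: "'x \<Rightarrow> real" and p :: real and x0 :: 'x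
  assumes G: "weighted_graph b m c"
    and c0: "\<forall>x. c x = 0"
    and p: "1 < p"
  shows
    "(p_parabolic b c p \<longleftrightarrow> Dp b c p = D0p b c p x0)
   \<and> (p_parabolic b c p \<longleftrightarrow>
        (\<forall>\<mu>::'x \<Rightarrow> real. (\<forall>x. 0 < \<mu> x) \<longrightarrow>
            Dp b c p \<inter> lp p \<mu> = D0p b c p x0 \<inter> lp p \<mu>))
   \<and> (p_parabolic b c p \<longleftrightarrow> (\<lambda>_. 1) \<in> D0p b c p x0)
   \<and> (p_parabolic b c p \<longleftrightarrow>
        (\<exists>e :: nat \<Rightarrow> 'x \<Rightarrow> real. (\<forall>n. fin_supp (e n)) \<and> (\<forall>n x. 0 \<le> e n x)
            \<and> (\<forall>n x. e n x \<le> e (Suc n) x) \<and> (\<forall>x. (\<lambda>n. e n x) \<longlonglongrightarrow> 1)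
            \<and> (\<lambda>n. energy b c p (e n)) \<longlonglongrightarrow> 0))
   \<and> (p_parabolic b c p \<longleftrightarrow>
        (\<exists>e :: nat \<Rightarrow> 'x \<Rightarrow> real. (\<forall>n. fin_supp (e n)) \<and> (\<forall>x. (\<lambda>n. e n x) \<longlonglongrightarrow> 1)
            \<and> (SUP n. energy b c p (e n)) < \<infinity>))
   \<and> (p_parabolic b c p \<longleftrightarrow>
        (\<exists>u\<in>D0p b c p x0. \<exists>K. finite K \<and> (INF x\<in>UNIV - K. ereal (u x)) > 0))
   \<and> (p_parabolic b c p \<longleftrightarrow> (\<exists>y0. \<not> equiv_functionals b c p y0))
   \<and> (p_parabolic b c p \<longleftrightarrow> (\<forall>y0. \<not> equiv_functionals b c p y0))"
proof -
  interpret p_energy_graph b p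
    using G p unfolding weighted_graph_def by unfold_locales auto
  have c: "c = (\<lambda>_. 0)" using c0 by auto
  have some: "p_parabolic b (\<lambda>_. 0) p \<longleftrightarrow> (\<exists>y0. \<not> equiv_functionals b (\<lambda>_. 0) p y0)"
    and all: "p_parabolic b (\<lambda>_. 0) p \<longleftrightarrow> (\<forall>y0. \<not> equiv_functionals b (\<lambda>_. 0) p y0)"
    using not_equiv_if_parabolic equiv_if_not_parabolic by blast+
  show ?thesis
    unfolding c
    by (intro conjI parabolic_iff_Dp_eq_D0 parabolic_iff_Dp_lp_eq_D0_lp parabolic_iff_one_mem_D0
        parabolic_iff_exhaustion parabolic_iff_bounded_approx parabolic_iff_D0_pos_off_finite some all)
qed

end
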